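(* Let $\lambda=\Lambda_1(1-\sigma^2)$ with $\sigma>0$ small, and define $\hat K:\mathscr A(\mathcal S)\to C[-\pi,\pi]$ by $$(\hat K A)(t)=\int_{\mathbb R}L_1(t,p)\frac{A(p)}{(\lambda_1(\tau)-\lambda)(\lambda_2(\tau)-\lambda)}\,dp,\qquad\tau=\sqrt{k^2+p^2}.$$ Then the operator $\hat T_0A:=\hat KA-\frac1\sigma A(0)R_0(t)$, with $R_0(t)=-De^{\varepsilon kY(t)}$ and $$D=-e^{-ka}P_0(k,\Lambda_1)\frac{1}{\Lambda_2-\Lambda_1}\cdot\frac{k}{q_1\lambda_1'(k)},$$ is bounded from $\mathscr A(\mathcal S)$ to $C[-\pi,\pi]$ uniformly in $\sigma$ for small $\sigma$.
   Context: Fix $k>0$, $a>0$, $b>0$, $\beta\in(0,1)$, $\alpha=1-\beta$; $X,Y$ real $2\pi$-periodic smooth functions; $\varepsilon>0$ small. $\lambda_1(\tau)=\dfrac{\alpha\tau\tanh b\tau}{1+\beta\tanh b\tau}$, $\lambda_2(\tau)=\tau$, $\Lambda_1=\lambda_1(k)$, $\Lambda_2=k$, $q_1=\sqrt{2k\Lambda_1/\lambda_1'(k)}$, $$P_0(\tau,\lambda)=\frac{1-\beta\tanh\tau b}{1+\beta\tanh\tau b}(\lambda+\tau)\Big(\lambda-\frac{\alpha\tau\tanh\tau b}{1-\beta\tanh\tau b}\Big),$$ $L_1(t,p)=\frac1{2\pi}P_0(\tau,\lambda)e^{-(a-\varepsilon Y(t))\tau+ip\varepsilon X(t)}$. $\mathcal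 S$ is a fixed sufficiently narrow horizontal strip around $\mathbb R$ in which the only zeros of $(\lambda_1(\tau)-\lambda)(\lambda_2(\tau)-\lambda)$ are $p=\pm ip_{01}$ with $p_{01}=q_1\sigma+O(\sigma^2)$; $\mathscr A(\mathcal S)$ is the Banach space of bounded analytic functions on $\mathcal S$ with the sup norm. *)

theory Defs
  imports "HOL-Analysis.Analysis"
begin

text \<open>Dispersion branches: lam1 (depends on beta, b) and lam2 tau = tau.\<close>
definition lam1 :: "real \<Rightarrow> real \<Rightarrow> real \<Rightarrow> real" where
  "lam1 \<beta> b \<tau> = (1 - \<beta>) * \<tau> * tanh (b * \<tau>) / (1 + \<beta> * tanh (b * \<tau>))"

definition P0 :: "real \<Rightarrow> real \<Rightarrow> real \<Rightarrow> real \<Rightarrow> real" where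
  "P0 \<beta> b \<tau> l =
     (1 - \<beta> * tanh (\<tau> * b)) / (1 + \<beta> * tanh (\<tau> * b)) * (l + \<tau>)
     * (l - (1 - \<beta>) * \<tau> * tanh (\<tau> * b) / (1 - \<beta> * tanh (\<tau> * b)))"

text \<open>Lambda_1 = lam1(k), Lambda_2 = k, q_1 = sqrt(2 k Lambda_1 / lam1'(k)).\<close>
definition Lam1 :: "real \<Rightarrow> real \<Rightarrow> real \<Rightarrow> real" where
  "Lam1 \<beta> b k = lam1 \<beta> b k"

definition q1 :: "real \<Rightarrow> real \<Rightarrow> real \<Rightarrow> real" where
  "q1 \<beta> b k = sqrt (2 * k * Lam1 \<beta> b k / deriv (lam1 \<beta> b) k)"

definition L1 :: "real \<Rightarrow> real \<Rightarrow> real \<Rightarrow> real \<Rightarrow> real \<Rightarrow> (real \<Rightarrow> real) \<Rightarrow> (real \<Rightarrow> real)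
                   \<Rightarrow> real \<Rightarrow> real \<Rightarrow> real \<Rightarrow> complex" where
  "L1 \<beta> b k a \<epsilon> X Y l t p =
     (let \<tau> = sqrt (k^2 + p^2) in
       complex_of_real (1 / (2 * pi) * P0 \<beta> b \<tau> l * exp (- (a - \<epsilon> * Y t) * \<tau>))
       * exp (\<i> * complex_of_real (p * \<epsilon> * X t)))"

definition Kint :: "real \<Rightarrow> real \<Rightarrow> real \<Rightarrow> real \<Rightarrow> real \<Rightarrow> (real \<Rightarrow> real) \<Rightarrow> (real \<Rightarrow> real)
                   \<Rightarrow> real \<Rightarrow> (complex \<Rightarrow> complex) \<Rightarrow> real \<Rightarrow> real \<Rightarrow> complex" where
  "Kint \<beta> b k a \<epsilon> X Y l A t p =
     (let \<tau> = sqrt (k^2 + p^2) in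
       L1 \<beta> b k a \<epsilon> X Y l t p * A (complex_of_real p)
       / complex_of_real ((lam1 \<beta> b \<tau> - l) * (\<tau> - l)))"

definition Khat :: "real \<Rightarrow> real \<Rightarrow> real \<Rightarrow> real \<Rightarrow> real \<Rightarrow> (real \<Rightarrow> real) \<Rightarrow> (real \<Rightarrow> real)
                   \<Rightarrow> real \<Rightarrow> (complex \<Rightarrow> complex) \<Rightarrow> real \<Rightarrow> complex" where
  "Khat \<beta> b k a \<epsilon> X Y l A t = (LINT p|lborel. Kint \<beta> b k a \<epsilon> X Y l A t p)"

definition Dconst :: "real \<Rightarrow> real \<Rightarrow> real \<Rightarrow> real \<Rightarrow> real" where
  "Dconst \<beta> b k a =
     - exp (- k * a) * P0 \<beta> b k (Lam1 \<beta> b k) * (1 / (k - Lam1 \<beta> b k))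
     * (k / (q1 \<beta> b k * deriv (lam1 \<beta> b) k))"

definition R0 :: "real \<Rightarrow> real \<Rightarrow> real \<Rightarrow> real \<Rightarrow> real \<Rightarrow> (real \<Rightarrow> real) \<Rightarrow> real \<Rightarrow> real" where
  "R0 \<beta> b k a \<epsilon> Y t = - Dconst \<beta> b k a * exp (\<epsilon> * k * Y t)"

definition T0hat :: "real \<Rightarrow> real \<Rightarrow> real \<Rightarrow> real \<Rightarrow> real \<Rightarrow> (real \<Rightarrow> real) \<Rightarrow> (real \<Rightarrow> real)
                   \<Rightarrow> real \<Rightarrow> (complex \<Rightarrow> complex) \<Rightarrow> real \<Rightarrow> complex" where
  "T0hat \<beta> b k a \<epsilon> X Y \<sigma> A t =
     Khat \<beta> b k a \<epsilon> X Y (Lam1 \<beta> b k * (1 - \<sigma>^2)) A t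
     - complex_of_real (1 / \<sigma>) * A 0 * complex_of_real (R0 \<beta> b k a \<epsilon> Y t)"

definition strip :: "real \<Rightarrow> complex set" where
  "strip \<delta> = {p. \<bar>Im p\<bar> < \<delta>}"

definition smooth_real :: "(real \<Rightarrow> real) \<Rightarrow> bool" where
  "smooth_real f \<longleftrightarrow> (\<forall>n x. (deriv ^^ n) f differentiable (at x))"

end

theory Submission
  imports Defs "HOL-Complex_Analysis.Complex_Analysis" "HOL-Probability.Sinc_Integral"
begin

text \<open>Write the integrand of \<open>K\<close> as \<open>g(\<tau>) e^(i p x) A(p) / (\<lambda>\<^sub>1(\<tau>) - \<lambda>)\<close>, where the amplitude
  \<open>g\<close> is smooth near \<open>\<tau> = k\<close> and decays like \<open>1/(1 + p\<^sup>2)\<close>. For \<open>\<lambda> = \<Lambda>\<^sub>1 (1 - \<sigma>\<^sup>2)\<close> the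
  denominator is \<open>\<Lambda>\<^sub>1 \<sigma>\<^sup>2 + c p\<^sup>2 + O(p\<^sup>4)\<close> near \<open>p = 0\<close>, with \<open>c = \<lambda>\<^sub>1'(k)/(2k)\<close>. Hence the
  Lorentzian \<open>g(k) A(0) / (\<Lambda>\<^sub>1 \<sigma>\<^sup>2 + c p\<^sup>2)\<close> carries the whole singular part: its integral
  \<open>\<pi> q\<^sub>1 g(k) A(0) / (\<Lambda>\<^sub>1 \<sigma>)\<close> equals \<open>A(0) R\<^sub>0(t) / \<sigma>\<close> up to \<open>O(\<sigma>) \<parallel>A\<parallel>\<close>. Pairing \<open>p\<close> with
  \<open>-p\<close> removes the first-order Taylor term of \<open>e^(i p x) A(p)\<close>, and with Cauchy's estimate for the
  second derivative on the strip the remaining integrand is bounded by \<open>C \<parallel>A\<parallel> / (1 + p\<^sup>2)\<close>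
  uniformly in \<open>\<sigma>\<close>. Continuity in \<open>t\<close> follows by dominated convergence.\<close>

lemma one_plus_mult_tanh_pos:
  fixes c x :: real
  assumes "\<bar>c\<bar> \<le> 1"
  shows "0 < 1 + c * tanh x"
proof -
  have "\<bar>tanh x\<bar> < 1"
    using tanh_real_bounds[of x] by auto
  then have "\<bar>c * tanh x\<bar> < 1"
    using assms by (simp add: abs_mult) (meson abs_ge_zero le_less_trans mult_left_le_one_le)
  then show ?thesis by linarith
qed

lemma uniformly_lipschitz_if_continuous_deriv:
  fixes f D :: "'z::topological_space \<Rightarrow> real \<Rightarrow> real"
  assumes "compact K"
    and deriv: "\<And>z s. z \<in> K \<Longrightarrow> s \<in> {c..d} \<Longrightarrow> (f z has_field_derivative D z s) (at s)"
    and "continuous_on (K \<times> {c..d}) (\<lambda>(z, s). D z s)"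
  shows "\<exists>L\<ge>0. \<forall>z\<in>K. \<forall>s\<in>{c..d}. \<forall>s'\<in>{c..d}. \<bar>f z s - f z s'\<bar> \<le> L * \<bar>s - s'\<bar>"
proof -
  have "bounded ((\<lambda>(z, s). D z s) ` (K \<times> {c..d}))"
    using assms by (intro compact_imp_bounded compact_continuous_image compact_Times) auto
  then obtain L where "L > 0" and L: "\<And>z s. z \<in> K \<Longrightarrow> s \<in> {c..d} \<Longrightarrow> \<bar>D z s\<bar> \<le> L"
    unfolding bounded_pos by force
  have "\<bar>f z s - f z s'\<bar> \<le> L * \<bar>s - s'\<bar>" if "z \<in> K" "s \<in> {c..d}" "s' \<in> {c..d}" for z s s'
    using field_differentiable_bound[of "{c..d}" "f z" "D z" L s s'] that deriv L
    by (auto intro: has_field_derivative_at_within)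
  with \<open>L > 0\<close> show ?thesis by (intro exI[of _ L]) auto
qed

lemma first_order_taylor_bound:
  fixes f f' :: "real \<Rightarrow> real"
  assumes deriv: "\<And>u. u \<in> {c..d} \<Longrightarrow> (f has_field_derivative f' u) (at u)"
    and lip: "\<And>u. u \<in> {c..d} \<Longrightarrow> \<bar>f' u - f' c\<bar> \<le> L * (u - c)"
    and "0 \<le> L" "s \<in> {c..d}"
  shows "\<bar>f s - f c - f' c * (s - c)\<bar> \<le> L * (s - c)^2"
proof -
  define h where "h u = f u - f' c * u" for u
  have "(h has_field_derivative f' u - f' c) (at u within {c..s})" if "u \<in> {c..s}" for u
    unfolding h_def using that \<open>s \<in> {c..d}\<close>
    by (auto intro!: derivative_eq_intros has_field_derivative_at_within[OF deriv])
  moreover have "\<bar>f' u - f' c\<bar> \<le> L * (s - c)" if "u \<in> {c..s}" for u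
  proof -
    have "L * (u - c) \<le> L * (s - c)"
      using that \<open>0 \<le> L\<close> by (intro mult_left_mono) auto
    then show ?thesis
      using lip[of u] that \<open>s \<in> {c..d}\<close> by auto
  qed
  ultimately have "\<bar>h s - h c\<bar> \<le> L * (s - c) * \<bar>s - c\<bar>"
    using field_differentiable_bound[of "{c..s}" h "\<lambda>u. f' u - f' c" "L * (s - c)" s c]
      \<open>s \<in> {c..d}\<close> by auto
  then show ?thesis
    using \<open>s \<in> {c..d}\<close> by (simp add: h_def power2_eq_square algebra_simps)
qed

lemma open_strip: "open (strip \<delta>)"
proof -
  have "strip \<delta> = {z. Im z < \<delta>} \<inter> {z. Im z > - \<delta>}"
    by (auto simp: strip_def)
  then show ?thesis
    by (simp add: open_Int open_halfspace_Im_lt open_halfspace_Im_gt)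
qed

lemma ball_subset_strip: "ball 0 \<delta> \<subseteq> strip \<delta>"
proof
  fix z :: complex
  assume "z \<in> ball 0 \<delta>"
  then show "z \<in> strip \<delta>"
    using abs_Im_le_cmod[of z] by (simp add: strip_def)
qed

lemma of_real_in_strip: "0 < \<delta> \<Longrightarrow> complex_of_real p \<in> strip \<delta>"
  by (simp add: strip_def)

lemma second_deriv_bound_near_0:
  fixes B :: "complex \<Rightarrow> complex"
  assumes hol: "B holomorphic_on strip \<delta>" and bnd: "\<And>z. z \<in> strip \<delta> \<Longrightarrow> cmod (B z) \<le> M"
    and "z \<in> ball 0 (\<delta> / 2)"
  shows "cmod ((deriv ^^ 2) B z) \<le> 8 * M / \<delta>^2"
proof -
  have "0 < \<delta>"
    using assms(3) norm_ge_zero[of z] by (simp, linarith)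
  have cb: "cball z (\<delta> / 2) \<subseteq> strip \<delta>"
  proof
    fix w assume "w \<in> cball z (\<delta> / 2)"
    then have "dist 0 w < \<delta>"
      using assms(3) dist_triangle[of 0 w z] by (simp add: dist_commute)
    then show "w \<in> strip \<delta>"
      using ball_subset_strip[of \<delta>] by auto
  qed
  have "cmod ((deriv ^^ 2) B z) \<le> fact 2 * M / (\<delta> / 2)^2"
  proof (rule Cauchy_inequality)
    show "B holomorphic_on ball z (\<delta> / 2)"
      using hol cb ball_subset_cball holomorphic_on_subset by blast
    show "continuous_on (cball z (\<delta> / 2)) B"
      using hol cb holomorphic_on_imp_continuous_on continuous_on_subset by blast
    show "cmod (B w) \<le> M" if "cmod (z - w) = \<delta> / 2" for w
      using bnd cb that by (auto simp: dist_norm)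
  qed (use \<open>0 < \<delta>\<close> in simp)
  then show ?thesis
    by (simp add: power_divide fact_numeral)
qed

text \<open>The first-order Taylor terms at \<open>p\<close> and \<open>-p\<close> cancel, leaving two second-order remainders.\<close>
lemma second_difference_bound_near_0:
  fixes B :: "complex \<Rightarrow> complex"
  assumes hol: "B holomorphic_on strip \<delta>" and bnd: "\<And>z. z \<in> strip \<delta> \<Longrightarrow> cmod (B z) \<le> M"
    and "\<bar>p\<bar> < \<delta> / 2"
  shows "cmod (B (of_real p) + B (- of_real p) - 2 * B 0) \<le> 16 * M / \<delta>^2 * p^2"
proof -
  define S where "S = ball (0::complex) (\<delta> / 2)"
  define f where "f i = (deriv ^^ i) B" for i
  have hf: "f i holomorphic_on strip \<delta>" for i
    unfolding f_def by (rule holomorphic_higher_deriv[OF hol open_strip])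
  have "0 < \<delta>"
    using assms(3) by linarith
  then have "S \<subseteq> strip \<delta>"
    using ball_subset_strip[of \<delta>] unfolding S_def by auto
  then have fd: "(f i has_field_derivative f (Suc i) x) (at x within S)" if "x \<in> S" for i x
    using holomorphic_derivI[OF hf open_strip, of x i S] that by (auto simp: f_def)
  have taylor: "cmod (B z - (B 0 + deriv B 0 * z)) \<le> 8 * M / \<delta>^2 * (cmod z)^2" if "z \<in> S" for z
  proof -
    have "cmod (f 0 z - (\<Sum>i\<le>1. f i 0 * (z - 0) ^ i / fact i)) \<le> 8 * M / \<delta>^2 * cmod (z - 0) ^ Suc 1 / fact 1"
      by (rule field_Taylor[where S=S and n=1 and f=f])
        (use fd second_deriv_bound_near_0[OF hol bnd] that assms(3)
          in \<open>auto simp: S_def convex_ball f_def numeral_2_eq_2\<close>)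
    then show ?thesis
      by (simp add: f_def power2_eq_square)
  qed
  have "complex_of_real p \<in> S" "- complex_of_real p \<in> S"
    using assms(3) by (auto simp: S_def)
  from this[THEN taylor] have
    "cmod (B (of_real p) - (B 0 + deriv B 0 * of_real p)) + cmod (B (- of_real p) - (B 0 - deriv B 0 * of_real p))
      \<le> 16 * M / \<delta>^2 * p^2"
    by (simp add: norm_mult power2_eq_square)
  moreover have "B (of_real p) + B (- of_real p) - 2 * B 0
      = (B (of_real p) - (B 0 + deriv B 0 * of_real p)) + (B (- of_real p) - (B 0 - deriv B 0 * of_real p))"
    by (simp add: algebra_simps)
  ultimately show ?thesis
    by (metis norm_triangle_ineq order_trans)
qed

lemma second_difference_bound:
  fixes B :: "complex \<Rightarrow> complex"
  assumes hol: "B holomorphic_on strip \<delta>" and bnd: "\<And>z. z \<in> strip \<delta> \<Longrightarrow> cmod (B z) \<le> M"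
    and "0 < \<delta>"
  shows "cmod (B (of_real p) + B (- of_real p) - 2 * B 0) \<le> 16 * M / \<delta>^2 * p^2"
proof (cases "\<delta> / 2 \<le> \<bar>p\<bar>")
  case True
  have "0 \<le> M"
    using bnd[of 0] \<open>0 < \<delta>\<close> by (simp add: strip_def) (meson norm_ge_zero order_trans)
  have "cmod (B (of_real p) + B (- of_real p) - 2 * B 0) \<le> cmod (B (of_real p) + B (- of_real p)) + cmod (2 * B 0)"
    by (rule norm_triangle_ineq4)
  also have "\<dots> \<le> cmod (B (of_real p)) + cmod (B (- of_real p)) + 2 * cmod (B 0)"
    using norm_triangle_ineq[of "B (of_real p)" "B (- of_real p)"] by (simp add: norm_mult)
  also have "\<dots> \<le> 4 * M"
    using bnd[of "of_real p"] bnd[of "- of_real p"] bnd[of 0] \<open>0 < \<delta>\<close> by (simp add: strip_def)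
  also have "\<dots> \<le> 16 * M / \<delta>^2 * p^2"
  proof -
    have "(\<delta> / 2)^2 \<le> p^2"
      using True \<open>0 < \<delta>\<close> by (metis abs_ge_zero power2_abs power_mono less_imp_le half_gt_zero)
    then have "4 * M * \<delta>^2 \<le> 4 * M * (4 * p^2)"
      using \<open>0 \<le> M\<close> by (intro mult_left_mono) (auto simp: power_divide)
    then show ?thesis
      using \<open>0 < \<delta>\<close> by (simp add: field_simps)
  qed
  finally show ?thesis .
next
  case False
  then show ?thesis
    using second_difference_bound_near_0[OF hol bnd] by simp
qed

lemma lborel_integral_inverse_1_plus_square:
  shows "integrable lborel (\<lambda>x::real. 1 / (1 + x^2))" and "(LINT x|lborel. 1 / (1 + x^2)) = pi"
proof -
  show "integrable lborel (\<lambda>x::real. 1 / (1 + x^2))"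
    using integrable_inverse_1_plus_square by (simp add: set_integrable_def inverse_eq_divide)
  show "(LINT x|lborel. 1 / (1 + x^2)) = pi"
    using LBINT_inverse_1_plus_square
    by (simp add: interval_lebesgue_integral_def set_lebesgue_integral_def inverse_eq_divide)
qed

lemma lborel_integral_inverse_quadratic:
  fixes c d :: real
  assumes "0 < c" "0 < d"
  shows "integrable lborel (\<lambda>p. 1 / (c + d * p^2))"
    and "(LINT p|lborel. 1 / (c + d * p^2)) = pi / sqrt (c * d)"
proof -
  define r where "r = sqrt (d / c)"
  have "r > 0" using assms by (simp add: r_def)
  have eq: "(\<lambda>p. 1 / (c + d * p^2)) = (\<lambda>p. (1 / c) * ((\<lambda>x. 1 / (1 + x^2)) (0 + r * p)))"
    using assms by (auto simp: r_def field_simps power_mult_distrib)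
  have int: "integrable lborel (\<lambda>p. (\<lambda>x::real. 1 / (1 + x^2)) (0 + r * p))"
    using lborel_integrable_real_affine[OF lborel_integral_inverse_1_plus_square(1), of r 0]
      \<open>r > 0\<close> by simp
  then show "integrable lborel (\<lambda>p. 1 / (c + d * p^2))"
    unfolding eq by (rule integrable_mult_right)
  have "(LINT p|lborel. (\<lambda>x::real. 1 / (1 + x^2)) (0 + r * p)) = pi / r"
    using lborel_integral_real_affine[where c=r and f="\<lambda>x::real. 1 / (1 + x^2)" and t=0]
      lborel_integral_inverse_1_plus_square(2) \<open>r > 0\<close> by (simp add: field_simps)
  moreover have "1 / c * (pi / r) = pi / sqrt (c * d)"
    using assms by (simp add: r_def real_sqrt_divide real_sqrt_mult field_simps)
  ultimately show "(LINT p|lborel. 1 / (c + d * p^2)) = pi / sqrt (c * d)"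
    unfolding eq by (simp only: integral_mult_right_zero)
qed

lemma lborel_integral_reflect:
  fixes f :: "real \<Rightarrow> 'a::{banach, second_countable_topology}"
  shows "(LINT x|lborel. f (- x)) = (LINT x|lborel. f x)"
    and "integrable lborel (\<lambda>x. f (- x)) \<longleftrightarrow> integrable lborel f"
  using lborel_integral_real_affine[where c="-1" and f=f and t=0]
    lborel_integrable_real_affine_iff[where c="-1" and t=0 and f=f] by simp_all

lemma continuous_on_LINT_dominated:
  fixes f :: "'t::metric_space \<Rightarrow> 'x \<Rightarrow> 'b::{banach, second_countable_topology}"
  assumes meas: "\<And>t. t \<in> T \<Longrightarrow> f t \<in> borel_measurable M"
    and cont: "\<And>x. continuous_on T (\<lambda>t. f t x)"
    and "integrable M w" and dom: "\<And>t x. t \<in> T \<Longrightarrow> norm (f t x) \<le> w x"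
  shows "continuous_on T (\<lambda>t. LINT x|M. f t x)"
  unfolding continuous_on_sequentially
proof (intro allI impI ballI)
  fix ts t0 assume "t0 \<in> T" and ts: "(\<forall>n. ts n \<in> T) \<and> ts \<longlonglongrightarrow> t0"
  have "(\<lambda>n. f (ts n) x) \<longlonglongrightarrow> f t0 x" for x
    using cont[of x] ts \<open>t0 \<in> T\<close> by (auto simp: continuous_on_sequentially comp_def)
  then have "(\<lambda>n. LINT x|M. f (ts n) x) \<longlonglongrightarrow> (LINT x|M. f t0 x)"
    using ts \<open>t0 \<in> T\<close> by (intro integral_dominated_convergence[where w=w] assms AE_I2) auto
  then show "((\<lambda>t. LINT x|M. f t x) \<circ> ts) \<longlonglongrightarrow> (LINT x|M. f t0 x)"
    by (simp add: comp_def)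
qed

lemma norm_le_SUP_if_bounded:
  assumes "bounded (f ` S)" "z \<in> S"
  shows "norm (f z) \<le> (SUP x\<in>S. norm (f x))"
proof -
  have "bdd_above ((\<lambda>x. norm (f x)) ` S)"
    using assms(1) bdd_above_norm[of "f ` S"] by (simp add: image_image)
  then show ?thesis
    using assms(2) by (rule cSUP_upper[rotated])
qed

lemma compact_abs_bound:
  fixes f :: "'a::topological_space \<Rightarrow> real"
  assumes "compact S" "continuous_on S f"
  shows "\<exists>B\<ge>0. \<forall>t\<in>S. \<bar>f t\<bar> \<le> B"
proof -
  have "bounded (f ` S)"
    using assms by (intro compact_imp_bounded compact_continuous_image)
  then show ?thesis
    unfolding bounded_pos by (auto intro: less_imp_le)
qed

lemma small_multiples_uniformly_small:
  fixes f :: "'a::topological_space \<Rightarrow> real"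
  assumes "compact S" "continuous_on S f" "0 < c"
  shows "\<exists>\<epsilon>0>0. \<forall>\<epsilon>. 0 < \<epsilon> \<longrightarrow> \<epsilon> < \<epsilon>0 \<longrightarrow> (\<forall>t\<in>S. \<bar>\<epsilon> * f t\<bar> \<le> c)"
proof -
  obtain B where "0 \<le> B" and B: "\<forall>t\<in>S. \<bar>f t\<bar> \<le> B"
    using compact_abs_bound[OF assms(1,2)] by blast
  have "\<bar>\<epsilon> * f t\<bar> \<le> c" if "0 < \<epsilon>" "\<epsilon> < c / (B + 1)" "t \<in> S" for \<epsilon> t
  proof -
    have "\<bar>\<epsilon>\<bar> * \<bar>f t\<bar> \<le> c / (B + 1) * (B + 1)"
      using that B by (intro mult_mono) auto
    then show ?thesis
      using \<open>0 \<le> B\<close> by (simp add: abs_mult)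
  qed
  moreover have "0 < c / (B + 1)"
    using assms(3) \<open>0 \<le> B\<close> by simp
  ultimately show ?thesis
    by blast
qed

lemma smooth_real_continuous: "smooth_real f \<Longrightarrow> continuous_on UNIV f"
  unfolding smooth_real_def
  by (metis continuous_at_imp_continuous_on differentiable_imp_continuous_within funpow_0)

section \<open>The dispersion relation \<open>\<lambda>\<^sub>1\<close>\<close>

lemma tanh_denominators_nonzero:
  fixes \<beta> x :: real
  assumes "\<bar>\<beta>\<bar> \<le> 1"
  shows "1 + \<beta> * tanh x \<noteq> 0" and "1 - \<beta> * tanh x \<noteq> 0" and "\<beta> * tanh x \<noteq> 1"
proof -
  have "0 < 1 + \<beta> * tanh x" "0 < 1 + (- \<beta>) * tanh x"
    using one_plus_mult_tanh_pos[of \<beta> x] one_plus_mult_tanh_pos[of "- \<beta>" x] assms by auto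
  then show "1 + \<beta> * tanh x \<noteq> 0" "1 - \<beta> * tanh x \<noteq> 0" "\<beta> * tanh x \<noteq> 1"
    by auto
qed

definition dlam1 :: "real \<Rightarrow> real \<Rightarrow> real \<Rightarrow> real" where
  "dlam1 \<beta> b s = (1 - \<beta>) * (tanh (b * s) / (1 + \<beta> * tanh (b * s))
      + s * (b * (1 - (tanh (b * s))^2)) / (1 + \<beta> * tanh (b * s))^2)"

lemma lam1_has_field_derivative:
  assumes "\<bar>\<beta>\<bar> \<le> 1"
  shows "(lam1 \<beta> b has_field_derivative dlam1 \<beta> b s) (at s)"
proof -
  define T where "T = tanh (b * s)"
  define T' where "T' = b * (1 - T^2)"
  have nz: "1 + \<beta> * T \<noteq> 0"
    unfolding T_def using assms by (rule tanh_denominators_nonzero)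
  have dT: "((\<lambda>s. tanh (b * s)) has_field_derivative T') (at s)"
    unfolding T'_def T_def by (auto intro!: derivative_eq_intros simp: algebra_simps)
  have "((\<lambda>s. (1 - \<beta>) * (s * tanh (b * s) / (1 + \<beta> * tanh (b * s)))) has_field_derivative
      (1 - \<beta>) * (((s * T' + 1 * T) * (1 + \<beta> * T) - s * T * (0 + \<beta> * T')) / ((1 + \<beta> * T) * (1 + \<beta> * T))))
      (at s)"
    unfolding T_def T'_def
    by (rule DERIV_cmult[OF DERIV_divide[OF DERIV_mult'[OF DERIV_ident dT[unfolded T'_def T_def]]
          DERIV_add[OF DERIV_const DERIV_cmult[OF dT[unfolded T'_def T_def]]] nz[unfolded T_def]]])
  moreover have "(1 - \<beta>) * (((s * T' + 1 * T) * (1 + \<beta> * T) - s * T * (0 + \<beta> * T')) / ((1 + \<beta> * T) * (1 + \<beta> * T)))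
      = dlam1 \<beta> b s"
    using nz unfolding dlam1_def T_def[symmetric] T'_def[symmetric]
    by (simp add: divide_simps power2_eq_square) algebra
  moreover have "(\<lambda>s. (1 - \<beta>) * (s * tanh (b * s) / (1 + \<beta> * tanh (b * s)))) = lam1 \<beta> b"
    by (auto simp: lam1_def)
  ultimately show ?thesis
    by simp
qed

lemma lam1_pos:
  assumes "0 < \<beta>" "\<beta> < 1" "0 < b" "0 < s"
  shows "0 < lam1 \<beta> b s"
  using assms one_plus_mult_tanh_pos[of \<beta> "b * s"] by (simp add: lam1_def)

lemma lam1_less_self:
  assumes "0 < \<beta>" "\<beta> < 1" "0 < b" "0 < s"
  shows "lam1 \<beta> b s < s"
proof -
  define T where "T = tanh (b * s)"
  have "0 < T" "T < 1"
    using assms by (auto simp: T_def tanh_real_lt_1)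
  have "(1 - \<beta>) * T < 1 * 1"
    using assms \<open>0 < T\<close> \<open>T < 1\<close> by (intro mult_strict_mono) auto
  also have "\<dots> \<le> 1 + \<beta> * T"
    using assms \<open>0 < T\<close> by simp
  finally have "(1 - \<beta>) * T / (1 + \<beta> * T) < 1"
    using assms \<open>0 < T\<close> by (simp add: add_pos_pos)
  then have "s * ((1 - \<beta>) * T / (1 + \<beta> * T)) < s * 1"
    using assms by (intro mult_strict_left_mono) auto
  then show ?thesis
    by (simp add: lam1_def T_def[symmetric] ac_simps)
qed

lemma dlam1_pos:
  assumes "0 < \<beta>" "\<beta> < 1" "0 < b" "0 < s"
  shows "0 < dlam1 \<beta> b s"
proof -
  define T where "T = tanh (b * s)"
  have T: "0 < T" "T < 1" "0 < 1 + \<beta> * T"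
    using assms one_plus_mult_tanh_pos[of \<beta> "b * s"] by (auto simp: T_def tanh_real_lt_1)
  have "0 \<le> s * (b * (1 - T^2)) / (1 + \<beta> * T)^2"
    using assms T by (intro divide_nonneg_nonneg mult_nonneg_nonneg) (auto simp: power_le_one)
  moreover have "0 < T / (1 + \<beta> * T)"
    using T by simp
  ultimately show ?thesis
    using assms by (simp add: dlam1_def T_def[symmetric])
qed

lemma lam1_over_self_mono:
  assumes "0 < \<beta>" "\<beta> < 1" "0 < b" "0 < k" "k \<le> s"
  shows "lam1 \<beta> b k / k \<le> lam1 \<beta> b s / s"
proof -
  define Tk Ts where "Tk = tanh (b * k)" and "Ts = tanh (b * s)"
  have "0 \<le> Tk" "Tk \<le> Ts"
    using assms by (auto simp: Tk_def Ts_def)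
  then have "Tk * (1 + \<beta> * Ts) \<le> Ts * (1 + \<beta> * Tk)"
    by (simp add: algebra_simps)
  then have "Tk / (1 + \<beta> * Tk) \<le> Ts / (1 + \<beta> * Ts)"
    using assms \<open>0 \<le> Tk\<close> \<open>Tk \<le> Ts\<close> by (simp add: divide_simps add_pos_nonneg)
  then have "(1 - \<beta>) * (Tk / (1 + \<beta> * Tk)) \<le> (1 - \<beta>) * (Ts / (1 + \<beta> * Ts))"
    using assms by (intro mult_left_mono) auto
  then show ?thesis
    using assms by (simp add: lam1_def Tk_def[symmetric] Ts_def[symmetric])
qed

lemma lam1_second_order:
  assumes "0 < \<beta>" "\<beta> < 1"
  shows "\<exists>B\<ge>0. \<forall>s\<in>{k..k+1}. \<bar>lam1 \<beta> b s - lam1 \<beta> b k - dlam1 \<beta> b k * (s - k)\<bar> \<le> B * (s - k)^2"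
proof -
  have \<beta>: "\<bar>\<beta>\<bar> \<le> 1"
    using assms by simp
  note nz = tanh_denominators_nonzero(1)[OF \<beta>]
  have "\<exists>D. (\<forall>s. (dlam1 \<beta> b has_field_derivative D s) (at s)) \<and> continuous_on UNIV D"
    unfolding dlam1_def[abs_def]
    apply (rule exI, rule conjI, rule allI)
     apply (rule derivative_eq_intros refl | simp add: nz)+
    apply (intro continuous_intros)
    apply (auto simp: nz)
    done
  then obtain D where D: "\<And>s. (dlam1 \<beta> b has_field_derivative D s) (at s)" "continuous_on UNIV D"
    by blast
  have "continuous_on ({0::real} \<times> {k..k+1}) (\<lambda>(z, s). D s)"
    by (auto simp: split_def intro!: continuous_on_compose2[OF D(2)] continuous_intros)
  then obtain L where "0 \<le> L" and L: "\<And>s s'. s \<in> {k..k+1} \<Longrightarrow> s' \<in> {k..k+1} \<Longrightarrow>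
      \<bar>dlam1 \<beta> b s - dlam1 \<beta> b s'\<bar> \<le> L * \<bar>s - s'\<bar>"
    using uniformly_lipschitz_if_continuous_deriv[of "{0::real}" k "k+1" "\<lambda>_. dlam1 \<beta> b" "\<lambda>_. D"] D(1)
    by auto
  have "\<bar>lam1 \<beta> b s - lam1 \<beta> b k - dlam1 \<beta> b k * (s - k)\<bar> \<le> L * (s - k)^2" if "s \<in> {k..k+1}" for s
    using first_order_taylor_bound[of k "k+1" "lam1 \<beta> b" "dlam1 \<beta> b" L s]
      lam1_has_field_derivative[OF \<beta>] L[of _ k] \<open>0 \<le> L\<close> that by auto
  with \<open>0 \<le> L\<close> show ?thesis
    by blast
qed

lemma sqrt_add_square_minus_bounds:
  fixes k p :: real
  assumes "0 < k"
  shows "sqrt (k^2 + p^2) - k \<le> p^2 / (2 * k)"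
    and "p^2 \<le> 1 \<Longrightarrow> sqrt (k^2 + p^2) \<le> k + 1"
    and "p^2 \<le> 1 \<Longrightarrow> p^2 / (2 * k + 1) \<le> sqrt (k^2 + p^2) - k"
proof -
  define s where "s = sqrt (k^2 + p^2)"
  have ks: "k \<le> s"
    unfolding s_def by (rule real_sqrt_sum_squares_ge1)
  have "s^2 = k^2 + p^2"
    by (simp add: s_def)
  then have p2: "p^2 = (s - k) * (s + k)"
    by (simp add: algebra_simps power2_eq_square)
  have "(s - k) * (2 * k) \<le> p^2"
    unfolding p2 using ks by (intro mult_left_mono) auto
  then show "sqrt (k^2 + p^2) - k \<le> p^2 / (2 * k)"
    using assms by (simp add: s_def pos_le_divide_eq)
  show sk1: "sqrt (k^2 + p^2) \<le> k + 1" if "p^2 \<le> 1"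
  proof (rule power2_le_imp_le)
    show "(sqrt (k^2 + p^2))^2 \<le> (k + 1)^2"
      using that assms by (simp add: power2_eq_square algebra_simps)
  qed (use assms in simp)
  show "p^2 / (2 * k + 1) \<le> sqrt (k^2 + p^2) - k" if "p^2 \<le> 1"
  proof -
    have "p^2 \<le> (s - k) * (2 * k + 1)"
      unfolding p2 using ks sk1[OF that] by (intro mult_left_mono) (auto simp: s_def)
    then show ?thesis
      using assms by (simp add: s_def pos_divide_le_eq)
  qed
qed

section \<open>The kernel amplitude\<close>

text \<open>For \<open>s = \<tau>\<close> and \<open>y = \<epsilon> Y(t)\<close> this is \<open>L\<^sub>1(t,p) e^(-i p \<epsilon> X(t)) / (\<lambda>\<^sub>2(\<tau>) - \<lambda>)\<close>,
  the factor of the integrand of \<open>K\<close> that stays regular at \<open>\<tau> = k\<close>.\<close>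
definition kernel_amplitude :: "real \<Rightarrow> real \<Rightarrow> real \<Rightarrow> real \<Rightarrow> real \<Rightarrow> real \<Rightarrow> real" where
  "kernel_amplitude \<beta> b a l y s = P0 \<beta> b s l * exp (- (a - y) * s) / (2 * pi * (s - l))"

lemma P0_abs_le:
  assumes "0 < \<beta>" "\<beta> < 1" "0 < b" "0 \<le> l" "0 \<le> s"
  shows "\<bar>P0 \<beta> b s l\<bar> \<le> (l + s)^2"
proof -
  define T where "T = tanh (s * b)"
  have T: "0 \<le> T" "T < 1"
    using assms by (auto simp: T_def tanh_real_lt_1)
  have D1: "0 < 1 + \<beta> * T" and D2: "0 < 1 - \<beta> * T"
    using one_plus_mult_tanh_pos[of \<beta> "s * b"] one_plus_mult_tanh_pos[of "- \<beta>" "s * b"] assms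
    by (simp_all add: T_def)
  have r: "\<bar>(1 - \<beta> * T) / (1 + \<beta> * T)\<bar> \<le> 1"
    using D1 D2 T assms by (simp add: divide_simps)
  have "(1 - \<beta>) * T \<le> 1 - \<beta> * T"
    using T by (simp add: algebra_simps)
  then have "(1 - \<beta>) * s * T / (1 - \<beta> * T) \<le> s"
    using D2 assms by (simp add: divide_simps) (metis mult.assoc mult.commute mult_left_mono)
  moreover have "0 \<le> (1 - \<beta>) * s * T / (1 - \<beta> * T)"
    using D2 assms T by simp
  ultimately have l: "\<bar>l - (1 - \<beta>) * s * T / (1 - \<beta> * T)\<bar> \<le> l + s"
    using assms by linarith
  have "\<bar>P0 \<beta> b s l\<bar>
      = \<bar>(1 - \<beta> * T) / (1 + \<beta> * T)\<bar> * \<bar>l + s\<bar> * \<bar>l - (1 - \<beta>) * s * T / (1 - \<beta> * T)\<bar>"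
    by (simp add: P0_def T_def abs_mult)
  also have "\<dots> \<le> 1 * (l + s) * (l + s)"
    using r l assms by (intro mult_mono) auto
  finally show ?thesis
    by (simp add: power2_eq_square)
qed

lemma exp_neg_le_inverse_power4:
  fixes x :: real
  assumes "0 < x"
  shows "exp (- x) \<le> 1 / (x / 4)^4"
proof -
  have "(x / 4)^4 \<le> (1 + x / 4)^4"
    using assms by (intro power_mono) auto
  also have "\<dots> \<le> exp (x / 4) ^ 4"
    using assms by (intro power_mono exp_ge_add_one_self) auto
  also have "\<dots> = exp x"
    by (simp add: exp_of_nat_mult[symmetric])
  finally show ?thesis
    using assms by (simp add: exp_minus field_simps)
qed

lemma kernel_amplitude_bound:
  assumes "0 < \<beta>" "\<beta> < 1" "0 < b" "0 < a" "0 \<le> l" "l \<le> \<Lambda>" "\<Lambda> < k" "k \<le> s" "y \<le> a / 2"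
  shows "\<bar>kernel_amplitude \<beta> b a l y s\<bar> \<le> 16384 / (2 * pi * a^4 * (k - \<Lambda>)) * (1 / s^2)"
proof -
  have "0 < s" "k - \<Lambda> \<le> s - l"
    using assms by linarith+
  have P: "\<bar>P0 \<beta> b s l\<bar> \<le> (2 * s)^2"
    using P0_abs_le[of \<beta> b l s] power_mono[of "l + s" "2 * s" 2] assms \<open>0 < s\<close> by auto
  have "(a / 2) * s \<le> (a - y) * s"
    using assms \<open>0 < s\<close> by (intro mult_right_mono) auto
  then have "exp (- (a - y) * s) \<le> exp (- (a * s / 2))"
    by (simp add: algebra_simps)
  also have "\<dots> \<le> 1 / (a * s / 8)^4"
    using exp_neg_le_inverse_power4[of "a * s / 2"] assms \<open>0 < s\<close> by simp
  finally have E: "exp (- (a - y) * s) \<le> 1 / (a * s / 8)^4" .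
  have "\<bar>kernel_amplitude \<beta> b a l y s\<bar> = \<bar>P0 \<beta> b s l\<bar> * exp (- (a - y) * s) / (2 * pi * (s - l))"
    using \<open>k - \<Lambda> \<le> s - l\<close> assms by (simp add: kernel_amplitude_def abs_mult abs_divide)
  also have "\<dots> \<le> (2 * s)^2 * (1 / (a * s / 8)^4) / (2 * pi * (k - \<Lambda>))"
    using P E \<open>k - \<Lambda> \<le> s - l\<close> assms by (intro divide_mono mult_mono) auto
  also have "\<dots> = 16384 / (2 * pi * a^4 * (k - \<Lambda>)) * (1 / s^2)"
    using \<open>0 < s\<close> assms by (simp add: field_simps power2_eq_square power4_eq_xxxx)
  finally show ?thesis .
qed

lemma kernel_amplitude_decay:
  assumes "0 < \<beta>" "\<beta> < 1" "0 < b" "0 < a" "0 < k" "\<Lambda> < k"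
  shows "\<exists>C\<ge>0. \<forall>l y p. 0 \<le> l \<longrightarrow> l \<le> \<Lambda> \<longrightarrow> y \<le> a / 2 \<longrightarrow>
      \<bar>kernel_amplitude \<beta> b a l y (sqrt (k^2 + p^2))\<bar> \<le> C / (1 + p^2)"
proof -
  define C0 where "C0 = 16384 / (2 * pi * a^4 * (k - \<Lambda>))"
  have "0 \<le> C0"
    using assms by (simp add: C0_def)
  have "\<bar>kernel_amplitude \<beta> b a l y (sqrt (k^2 + p^2))\<bar> \<le> C0 * (1 + 1 / k^2) / (1 + p^2)"
    if "0 \<le> l" "l \<le> \<Lambda>" "y \<le> a / 2" for l y p
  proof -
    define s where "s = sqrt (k^2 + p^2)"
    have "k \<le> s"
      unfolding s_def by (rule real_sqrt_sum_squares_ge1)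
    have "1 + p^2 \<le> (1 + 1 / k^2) * s^2"
      using assms by (simp add: s_def field_simps)
    then have "1 / s^2 \<le> (1 + 1 / k^2) / (1 + p^2)"
      using assms \<open>k \<le> s\<close> by (simp add: divide_simps add_pos_nonneg mult.commute)
    then have "C0 * (1 / s^2) \<le> C0 * ((1 + 1 / k^2) / (1 + p^2))"
      using \<open>0 \<le> C0\<close> by (rule mult_left_mono)
    then show ?thesis
      using kernel_amplitude_bound[OF assms(1-4) that(1,2) assms(6) \<open>k \<le> s\<close> that(3)]
      by (simp add: s_def C0_def)
  qed
  moreover have "0 \<le> C0 * (1 + 1 / k^2)"
    using \<open>0 \<le> C0\<close> by simp
  ultimately show ?thesis
    by blast
qed

lemma kernel_amplitude_lipschitz_tau:
  assumes "0 < \<beta>" "\<beta> < 1" "\<Lambda> < k"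
  shows "\<exists>L\<ge>0. \<forall>l\<in>{0..\<Lambda>}. \<forall>y\<in>{-a/2..a/2}. \<forall>s\<in>{k..k+1}.
      \<bar>kernel_amplitude \<beta> b a l y s - kernel_amplitude \<beta> b a l y k\<bar> \<le> L * (s - k)"
proof -
  have "\<bar>\<beta>\<bar> \<le> 1"
    using assms by simp
  note p = tanh_denominators_nonzero(1)[OF this] and m = tanh_denominators_nonzero(2)[OF this]
  let ?g = "kernel_amplitude \<beta> b a"
  have "\<exists>D. (\<forall>l y s. l < s \<longrightarrow> (?g l y has_field_derivative D l y s) (at s))
      \<and> continuous_on {w::(real \<times> real) \<times> real. fst (fst w) < snd w} (\<lambda>w. D (fst (fst w)) (snd (fst w)) (snd w))"
    unfolding kernel_amplitude_def[abs_def] P0_def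
    apply (rule exI, rule conjI, intro allI impI)
     apply (rule derivative_eq_intros refl | (simp add: p m; fail) | rule m p)+
    apply (intro continuous_intros)
    apply (auto simp: p m tanh_denominators_nonzero(3)[OF \<open>\<bar>\<beta>\<bar> \<le> 1\<close>])
    done
  then obtain D where D: "\<And>l y s. l < s \<Longrightarrow> (?g l y has_field_derivative D l y s) (at s)"
    "continuous_on {w::(real \<times> real) \<times> real. fst (fst w) < snd w} (\<lambda>w. D (fst (fst w)) (snd (fst w)) (snd w))"
    by blast
  let ?K = "{0..\<Lambda>} \<times> {-a/2..a/2}"
  have cK: "compact ?K"
    by (intro compact_Times compact_Icc)
  have dK: "(?g (fst z) (snd z) has_field_derivative D (fst z) (snd z) s) (at s)"
    if "z \<in> ?K" "s \<in> {k..k+1}" for z s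
    using that assms by (intro D(1)) auto
  have "?K \<times> {k..k+1} \<subseteq> {w. fst (fst w) < snd w}"
    using assms by (clarsimp simp: mem_Times_iff)
  then have "continuous_on (?K \<times> {k..k+1}) (\<lambda>(z, s). D (fst z) (snd z) s)"
    unfolding split_def by (rule continuous_on_subset[OF D(2)])
  then obtain L where "0 \<le> L" and L: "\<forall>z\<in>?K. \<forall>s\<in>{k..k+1}. \<forall>s'\<in>{k..k+1}.
      \<bar>?g (fst z) (snd z) s - ?g (fst z) (snd z) s'\<bar> \<le> L * \<bar>s - s'\<bar>"
    using uniformly_lipschitz_if_continuous_deriv[where f="\<lambda>z. ?g (fst z) (snd z)" and D="\<lambda>z. D (fst z) (snd z)",
        OF cK dK] by blast
  show ?thesis
  proof (intro exI[of _ L] conjI ballI)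
    fix l y s assume "l \<in> {0..\<Lambda>}" "y \<in> {-a/2..a/2}" "s \<in> {k..k+1}"
    then show "\<bar>?g l y s - ?g l y k\<bar> \<le> L * (s - k)"
      using L[rule_format, of "(l, y)" s k] by auto
  qed (rule \<open>0 \<le> L\<close>)
qed

lemma kernel_amplitude_lipschitz_lambda:
  assumes "0 < \<beta>" "\<beta> < 1" "\<Lambda> < k"
  shows "\<exists>L\<ge>0. \<forall>y\<in>{-a/2..a/2}. \<forall>l\<in>{0..\<Lambda>}. \<forall>l'\<in>{0..\<Lambda>}.
      \<bar>kernel_amplitude \<beta> b a l y k - kernel_amplitude \<beta> b a l' y k\<bar> \<le> L * \<bar>l - l'\<bar>"
proof -
  have "\<bar>\<beta>\<bar> \<le> 1"
    using assms by simp
  note p = tanh_denominators_nonzero(1)[OF this] and m = tanh_denominators_nonzero(2)[OF this]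
    and m' = tanh_denominators_nonzero(3)[OF this]
  let ?g = "kernel_amplitude \<beta> b a"
  have "\<exists>D. (\<forall>y l. l < k \<longrightarrow> ((\<lambda>l. ?g l y k) has_field_derivative D y l) (at l))
      \<and> continuous_on {w::real \<times> real. snd w < k} (\<lambda>w. D (fst w) (snd w))"
    unfolding kernel_amplitude_def[abs_def] P0_def
    apply (rule exI, rule conjI, intro allI impI)
     apply (rule derivative_eq_intros refl | (simp add: p m m'; fail) | rule m p)+
    apply (intro continuous_intros)
    apply (auto simp: p m m')
    done
  then obtain D where D: "\<And>y l. l < k \<Longrightarrow> ((\<lambda>l. ?g l y k) has_field_derivative D y l) (at l)"
    "continuous_on {w::real \<times> real. snd w < k} (\<lambda>w. D (fst w) (snd w))"
    by blast
  have dK: "((\<lambda>l. ?g l y k) has_field_derivative D y l) (at l)"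
    if "y \<in> {-a/2..a/2}" "l \<in> {0..\<Lambda>}" for y l
    using that assms by (intro D(1)) auto
  have "{-a/2..a/2} \<times> {0..\<Lambda>} \<subseteq> {w. snd w < k}"
    using assms by (clarsimp simp: mem_Times_iff)
  then have "continuous_on ({-a/2..a/2} \<times> {0..\<Lambda>}) (\<lambda>(y, l). D y l)"
    unfolding split_def by (rule continuous_on_subset[OF D(2)])
  then show ?thesis
    using uniformly_lipschitz_if_continuous_deriv[where f="\<lambda>y l. ?g l y k" and D=D, OF compact_Icc dK] by simp
qed

section \<open>Estimate of the kernel integral\<close>

lemma quotient_difference_bound:
  fixes g g0 E Q p :: real
  assumes E: "0 < E" "m * p^2 \<le> E" "0 < m" and Q: "0 < Q" "d * p^2 \<le> Q" "0 < d"
    and g: "\<bar>g - g0\<bar> \<le> Lg * p^2" "0 \<le> Lg" "\<bar>g0\<bar> \<le> Cg"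
    and QE: "\<bar>Q - E\<bar> \<le> Cq * p^2 * p^2" "0 \<le> Cq"
  shows "\<bar>g / E - g0 / Q\<bar> \<le> Lg / m + Cg * Cq / (m * d)"
proof -
  have pE: "p^2 \<le> E / m" and pQ: "p^2 \<le> Q / d"
    using E Q by (simp_all add: pos_le_divide_eq mult.commute)
  have "\<bar>g - g0\<bar> \<le> Lg * (E / m)"
    using g pE by (meson mult_left_mono order_trans)
  then have t1: "\<bar>(g - g0) / E\<bar> \<le> Lg / m"
    using E by (simp add: abs_divide divide_simps mult.commute)
  have "Cq * p^2 * p^2 \<le> Cq * (E / m) * (Q / d)"
    using pE pQ QE(2) E Q by (intro mult_mono) auto
  then have "\<bar>Q - E\<bar> \<le> Cq * (E / m) * (Q / d)"
    using QE(1) by linarith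
  then have "\<bar>Q - E\<bar> / (E * Q) \<le> Cq / (m * d)"
    using E Q by (simp add: divide_simps ac_simps)
  then have "\<bar>g0\<bar> * (\<bar>Q - E\<bar> / (E * Q)) \<le> Cg * (Cq / (m * d))"
    using g(3) E Q by (intro mult_mono) auto
  then have t2: "\<bar>g0 * (Q - E) / (E * Q)\<bar> \<le> Cg * Cq / (m * d)"
    using E Q by (simp add: abs_divide abs_mult)
  have eq: "g / E - g0 / Q = (g - g0) / E + g0 * (Q - E) / (E * Q)"
    using E Q by (simp add: field_simps)
  show ?thesis
    unfolding eq by (rule order_trans[OF abs_triangle_ineq add_mono[OF t1 t2]])
qed

lemma symmetrized_difference_bound_near:
  fixes g g0 E Q p :: real and Bp Bm A0 :: complex
  assumes E: "0 < E" "m * p^2 \<le> E" "0 < m" and g: "\<bar>g\<bar> \<le> Cg"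
    and quot: "\<bar>g / E - g0 / Q\<bar> \<le> D"
    and F: "cmod (Bp + Bm - 2 * A0) \<le> KF * p^2" "0 \<le> KF" and A: "cmod A0 \<le> M"
  shows "cmod (of_real (g / E) * (Bp + Bm) - 2 * A0 * of_real (g0 / Q)) \<le> Cg * KF / m + 2 * M * D"
proof -
  have "p^2 \<le> E / m"
    using E by (simp add: pos_le_divide_eq mult.commute)
  then have "cmod (Bp + Bm - 2 * A0) \<le> KF * (E / m)"
    using F by (meson mult_left_mono order_trans)
  then have "cmod (Bp + Bm - 2 * A0) / E \<le> KF / m"
    using E by (simp add: divide_simps mult.commute)
  then have "\<bar>g\<bar> * (cmod (Bp + Bm - 2 * A0) / E) \<le> Cg * (KF / m)"
    using g F(2) E by (intro mult_mono) auto
  then have t1: "cmod (of_real (g / E) * (Bp + Bm - 2 * A0)) \<le> Cg * KF / m"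
    using E by (simp add: norm_mult abs_divide del: of_real_divide)
  have "cmod A0 * \<bar>g / E - g0 / Q\<bar> \<le> M * D"
    using A quot by (intro mult_mono) (auto intro: order_trans[OF norm_ge_zero])
  then have t2: "cmod (2 * A0 * of_real (g / E - g0 / Q)) \<le> 2 * M * D"
    by (simp add: norm_mult del: of_real_divide of_real_diff)
  have eq: "of_real (g / E) * (Bp + Bm) - 2 * A0 * of_real (g0 / Q)
      = of_real (g / E) * (Bp + Bm - 2 * A0) + 2 * A0 * of_real (g / E - g0 / Q)"
    by (simp add: algebra_simps)
  show ?thesis
    unfolding eq using t1 t2 norm_triangle_ineq[of "of_real (g / E) * (Bp + Bm - 2 * A0)" "2 * A0 * of_real (g / E - g0 / Q)"]
    by linarith
qed

lemma symmetrized_difference_bound_far: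
  fixes g g0 E Q p :: real and Bp Bm A0 :: complex
  assumes E: "0 < e" "e \<le> E" and Q: "0 < d" "d * (1 + p^2) \<le> Q"
    and g: "\<bar>g\<bar> \<le> Cg / (1 + p^2)" "\<bar>g0\<bar> \<le> Cg"
    and B: "cmod Bp \<le> N" "cmod Bm \<le> N" "cmod A0 \<le> M"
  shows "cmod (of_real (g / E) * (Bp + Bm) - 2 * A0 * of_real (g0 / Q))
      \<le> (2 * Cg * N / e + 2 * M * Cg / d) / (1 + p^2)"
proof -
  have P: "0 < 1 + p^2"
    by (simp add: add_pos_nonneg)
  have "0 \<le> Cg"
    using g(2) by linarith
  have "\<bar>g\<bar> / E \<le> (Cg / (1 + p^2)) / e"
    using g E \<open>0 \<le> Cg\<close> P by (intro frac_le) auto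
  moreover have "cmod (Bp + Bm) \<le> 2 * N"
    using B norm_triangle_ineq[of Bp Bm] by linarith
  ultimately have "\<bar>g\<bar> / E * cmod (Bp + Bm) \<le> (Cg / (1 + p^2)) / e * (2 * N)"
    using \<open>0 \<le> Cg\<close> E by (intro mult_mono) auto
  then have t1: "cmod (of_real (g / E) * (Bp + Bm)) \<le> 2 * Cg * N / e / (1 + p^2)"
    using E by (simp add: norm_mult abs_divide ac_simps del: of_real_divide)
  have "0 < Q"
    using Q P by (smt (verit) mult_pos_pos)
  then have "\<bar>g0\<bar> / Q \<le> Cg / (d * (1 + p^2))"
    using g Q P \<open>0 \<le> Cg\<close> by (intro frac_le) auto
  then have "cmod A0 * (\<bar>g0\<bar> / Q) \<le> M * (Cg / (d * (1 + p^2)))"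
    using B(3) \<open>0 < Q\<close> by (intro mult_mono) (auto intro: order_trans[OF norm_ge_zero])
  then have t2: "cmod (2 * A0 * of_real (g0 / Q)) \<le> 2 * M * Cg / d / (1 + p^2)"
    using \<open>0 < Q\<close> by (simp add: norm_mult abs_divide del: of_real_divide)
  show ?thesis
    using t1 t2 norm_triangle_ineq4[of "of_real (g / E) * (Bp + Bm)" "2 * A0 * of_real (g0 / Q)"]
    by (simp add: add_divide_distrib)
qed

text \<open>The integrand of \<open>K\<close> at spectral parameter \<open>l\<close>, with \<open>y, x\<close> standing for \<open>\<epsilon> Y(t), \<epsilon> X(t)\<close>.\<close>
definition kernel_integrand ::
    "real \<Rightarrow> real \<Rightarrow> real \<Rightarrow> real \<Rightarrow> real \<Rightarrow> real \<Rightarrow> real \<Rightarrow> (complex \<Rightarrow> complex) \<Rightarrow> real \<Rightarrow> complex" where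
  "kernel_integrand \<beta> b a k l y x A p =
     of_real (kernel_amplitude \<beta> b a l y (sqrt (k^2 + p^2)) / (lam1 \<beta> b (sqrt (k^2 + p^2)) - l))
     * (exp (\<i> * of_real p * of_real x) * A (of_real p))"

text \<open>Fixing the constants of the regularity estimates as locale parameters makes the final
  constant visibly independent of \<open>\<sigma>\<close>, of \<open>t\<close> and of \<open>A\<close>.\<close>
locale kernel_estimate =
  fixes \<beta> b k a Cg Ls Ll B2 :: real
  assumes \<beta>: "0 < \<beta>" "\<beta> < 1" and b: "0 < b" and k: "0 < k" and a: "0 < a"
    and decay: "\<And>l y p. 0 \<le> l \<Longrightarrow> l \<le> lam1 \<beta> b k \<Longrightarrow> y \<le> a / 2 \<Longrightarrow>
      \<bar>kernel_amplitude \<beta> b a l y (sqrt (k^2 + p^2))\<bar> \<le> Cg / (1 + p^2)"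
    and lipschitz_s: "\<And>l y s. l \<in> {0..lam1 \<beta> b k} \<Longrightarrow> y \<in> {-a/2..a/2} \<Longrightarrow> s \<in> {k..k+1} \<Longrightarrow>
      \<bar>kernel_amplitude \<beta> b a l y s - kernel_amplitude \<beta> b a l y k\<bar> \<le> Ls * (s - k)"
    and lipschitz_l: "\<And>y l l'. y \<in> {-a/2..a/2} \<Longrightarrow> l \<in> {0..lam1 \<beta> b k} \<Longrightarrow> l' \<in> {0..lam1 \<beta> b k} \<Longrightarrow>
      \<bar>kernel_amplitude \<beta> b a l y k - kernel_amplitude \<beta> b a l' y k\<bar> \<le> Ll * \<bar>l - l'\<bar>"
    and second_order: "\<And>s. s \<in> {k..k+1} \<Longrightarrow>
      \<bar>lam1 \<beta> b s - lam1 \<beta> b k - dlam1 \<beta> b k * (s - k)\<bar> \<le> B2 * (s - k)^2"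
    and nonneg: "0 \<le> Cg" "0 \<le> Ls" "0 \<le> Ll" "0 \<le> B2"

lemma kernel_estimate_exists:
  assumes "0 < \<beta>" "\<beta> < 1" "0 < b" "0 < k" "0 < a"
  shows "\<exists>Cg Ls Ll B2. kernel_estimate \<beta> b k a Cg Ls Ll B2"
proof -
  have \<Lambda>: "lam1 \<beta> b k < k"
    by (rule lam1_less_self[OF assms(1-4)])
  obtain Cg where "0 \<le> Cg" "\<forall>l y p. 0 \<le> l \<longrightarrow> l \<le> lam1 \<beta> b k \<longrightarrow> y \<le> a / 2 \<longrightarrow>
      \<bar>kernel_amplitude \<beta> b a l y (sqrt (k^2 + p^2))\<bar> \<le> Cg / (1 + p^2)"
    using kernel_amplitude_decay[OF assms(1-3,5,4) \<Lambda>] by blast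
  moreover obtain Ls where "0 \<le> Ls" "\<forall>l\<in>{0..lam1 \<beta> b k}. \<forall>y\<in>{-a/2..a/2}. \<forall>s\<in>{k..k+1}.
      \<bar>kernel_amplitude \<beta> b a l y s - kernel_amplitude \<beta> b a l y k\<bar> \<le> Ls * (s - k)"
    using kernel_amplitude_lipschitz_tau[OF assms(1,2) \<Lambda>] by blast
  moreover obtain Ll where "0 \<le> Ll" "\<forall>y\<in>{-a/2..a/2}. \<forall>l\<in>{0..lam1 \<beta> b k}. \<forall>l'\<in>{0..lam1 \<beta> b k}.
      \<bar>kernel_amplitude \<beta> b a l y k - kernel_amplitude \<beta> b a l' y k\<bar> \<le> Ll * \<bar>l - l'\<bar>"
    using kernel_amplitude_lipschitz_lambda[OF assms(1,2) \<Lambda>] by blast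
  moreover obtain B2 where "0 \<le> B2" "\<forall>s\<in>{k..k+1}.
      \<bar>lam1 \<beta> b s - lam1 \<beta> b k - dlam1 \<beta> b k * (s - k)\<bar> \<le> B2 * (s - k)^2"
    using lam1_second_order[OF assms(1,2)] by blast
  ultimately have "kernel_estimate \<beta> b k a Cg Ls Ll B2"
    using assms by unfold_locales auto
  then show ?thesis
    by blast
qed

context kernel_estimate
begin

abbreviation \<Lambda> :: real where
  "\<Lambda> \<equiv> lam1 \<beta> b k"

lemma \<Lambda>_pos: "0 < \<Lambda>" and \<Lambda>_less_k: "\<Lambda> < k" and dlam1_k_pos: "0 < dlam1 \<beta> b k"
  using lam1_pos[OF \<beta> b k] lam1_less_self[OF \<beta> b k] dlam1_pos[OF \<beta> b k] by auto

text \<open>The coefficient of \<open>p\<^sup>2\<close> in the expansion of \<open>\<lambda>\<^sub>1(\<tau>) - \<Lambda>\<^sub>1\<close> at \<open>p = 0\<close>.\<close>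
definition model_coeff :: real where
  "model_coeff = dlam1 \<beta> b k / (2 * k)"

lemma model_coeff_pos: "0 < model_coeff"
  using dlam1_k_pos k by (simp add: model_coeff_def)

lemma q1_eq: "q1 \<beta> b k = sqrt (\<Lambda> / model_coeff)"
proof -
  have "deriv (lam1 \<beta> b) k = dlam1 \<beta> b k"
    using \<beta> by (intro DERIV_imp_deriv lam1_has_field_derivative) simp
  then show ?thesis
    using k by (simp add: q1_def Lam1_def model_coeff_def field_simps)
qed

lemma q1_nonneg: "0 \<le> q1 \<beta> b k"
  using q1_eq \<Lambda>_pos model_coeff_pos by simp

lemma lam1_increment_ge: "\<Lambda> / k * (sqrt (k^2 + p^2) - k) \<le> lam1 \<beta> b (sqrt (k^2 + p^2)) - \<Lambda>"
proof -
  define s where "s = sqrt (k^2 + p^2)"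
  have "k \<le> s"
    unfolding s_def by (rule real_sqrt_sum_squares_ge1)
  then have "\<Lambda> / k * s \<le> lam1 \<beta> b s"
    using lam1_over_self_mono[OF \<beta> b k] k by (simp add: field_simps)
  then show ?thesis
    using k by (simp add: s_def[symmetric] right_diff_distrib)
qed

lemma lam1_increment_nonneg: "0 \<le> \<Lambda> / k * (sqrt (k^2 + p^2) - k)"
  using \<Lambda>_pos k real_sqrt_sum_squares_ge1[of k p] by simp

definition near_slope :: real where
  "near_slope = \<Lambda> / (k * (2 * k + 1))"

definition far_gap :: real where
  "far_gap = \<Lambda> / k * (sqrt (k^2 + 1) - k)"

lemma near_slope_pos: "0 < near_slope"
  using \<Lambda>_pos k by (simp add: near_slope_def)

lemma far_gap_pos: "0 < far_gap"
proof -
  have "sqrt (k^2) < sqrt (k^2 + 1)"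
    by (rule real_sqrt_less_mono) simp
  then show ?thesis
    using \<Lambda>_pos k by (simp add: far_gap_def)
qed

lemma lam1_increment_near:
  assumes "p^2 \<le> 1"
  shows "near_slope * p^2 \<le> lam1 \<beta> b (sqrt (k^2 + p^2)) - \<Lambda>"
proof -
  have "near_slope * p^2 = \<Lambda> / k * (p^2 / (2 * k + 1))"
    using k by (simp add: near_slope_def field_simps)
  also have "\<dots> \<le> \<Lambda> / k * (sqrt (k^2 + p^2) - k)"
    using sqrt_add_square_minus_bounds(3)[OF k assms] \<Lambda>_pos k by (intro mult_left_mono) auto
  finally show ?thesis
    using lam1_increment_ge[of p] by linarith
qed

lemma lam1_increment_far:
  assumes "1 \<le> p^2"
  shows "far_gap \<le> lam1 \<beta> b (sqrt (k^2 + p^2)) - \<Lambda>"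
proof -
  have "far_gap \<le> \<Lambda> / k * (sqrt (k^2 + p^2) - k)"
    using assms \<Lambda>_pos k unfolding far_gap_def by (intro mult_left_mono) auto
  then show ?thesis
    using lam1_increment_ge[of p] by linarith
qed

definition model_error :: real where
  "model_error = (model_coeff + B2) / (4 * k^2)"

text \<open>Near \<open>p = 0\<close>, \<open>\<lambda>\<^sub>1(\<tau>) - \<Lambda>\<^sub>1 = \<lambda>\<^sub>1'(k) (\<tau> - k) + O((\<tau> - k)\<^sup>2)\<close> and
  \<open>\<tau> - k = p\<^sup>2/(2k) + O(p\<^sup>4)\<close>.\<close>
lemma model_denominator_error:
  assumes "p^2 \<le> 1"
  shows "\<bar>model_coeff * p^2 - (lam1 \<beta> b (sqrt (k^2 + p^2)) - \<Lambda>)\<bar> \<le> model_error * p^2 * p^2"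
proof -
  define u where "u = sqrt (k^2 + p^2) - k"
  have "0 \<le> u"
    using real_sqrt_sum_squares_ge1[of k p] by (simp add: u_def)
  have u2: "u \<le> p^2 / (2 * k)"
    using sqrt_add_square_minus_bounds(1)[OF k] by (simp add: u_def)
  have "(u + k)^2 = k^2 + p^2"
    by (simp add: u_def)
  then have pu: "p^2 = u * (u + 2 * k)"
    by (simp add: power2_eq_square algebra_simps)
  define r where "r = lam1 \<beta> b (sqrt (k^2 + p^2)) - \<Lambda> - dlam1 \<beta> b k * u"
  have "\<bar>r\<bar> \<le> B2 * u^2"
    unfolding r_def u_def
    using second_order sqrt_add_square_minus_bounds(2)[OF k assms] real_sqrt_sum_squares_ge1[of k p]
    by auto
  have "model_coeff * p^2 - (lam1 \<beta> b (sqrt (k^2 + p^2)) - \<Lambda>) = model_coeff * u^2 - r"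
    using k unfolding pu r_def model_coeff_def by (simp add: field_simps power2_eq_square)
  moreover have "\<bar>model_coeff * u^2 - r\<bar> \<le> (model_coeff + B2) * u^2"
    using abs_triangle_ineq4[of "model_coeff * u^2" r] \<open>\<bar>r\<bar> \<le> B2 * u^2\<close> model_coeff_pos
    by (simp add: distrib_right)
  ultimately have "\<bar>model_coeff * p^2 - (lam1 \<beta> b (sqrt (k^2 + p^2)) - \<Lambda>)\<bar> \<le> (model_coeff + B2) * u^2"
    by simp
  also have "\<dots> \<le> (model_coeff + B2) * (p^2 / (2 * k))^2"
    using \<open>0 \<le> u\<close> u2 model_coeff_pos nonneg by (intro mult_left_mono power_mono) auto
  also have "\<dots> = model_error * p^2 * p^2"
    using k by (simp add: model_error_def power2_eq_square field_simps)
  finally show ?thesis .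
qed

lemma amplitude_increment_near:
  assumes "l \<in> {0..\<Lambda>}" "y \<in> {-a/2..a/2}" "p^2 \<le> 1"
  shows "\<bar>kernel_amplitude \<beta> b a l y (sqrt (k^2 + p^2)) - kernel_amplitude \<beta> b a l y k\<bar> \<le> Ls / (2 * k) * p^2"
proof -
  have "\<bar>kernel_amplitude \<beta> b a l y (sqrt (k^2 + p^2)) - kernel_amplitude \<beta> b a l y k\<bar> \<le> Ls * (sqrt (k^2 + p^2) - k)"
    using lipschitz_s[OF assms(1,2)] sqrt_add_square_minus_bounds(2)[OF k assms(3)]
      real_sqrt_sum_squares_ge1[of k p] by auto
  also have "\<dots> \<le> Ls * (p^2 / (2 * k))"
    using sqrt_add_square_minus_bounds(1)[OF k] nonneg by (intro mult_left_mono) auto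
  finally show ?thesis
    by simp
qed

text \<open>\<open>pole_coeff y / \<sigma>\<close> is the integral of the Lorentzian model of the integrand at \<open>\<Lambda>\<^sub>1\<close>;
  it reproduces the subtracted term \<open>A(0) R\<^sub>0(t) / \<sigma>\<close>.\<close>
definition pole_coeff :: "real \<Rightarrow> real" where
  "pole_coeff y = pi * q1 \<beta> b k / \<Lambda> * kernel_amplitude \<beta> b a \<Lambda> y k"

definition remainder_const :: "real \<Rightarrow> real \<Rightarrow> real" where
  "remainder_const \<delta> N =
     2 * (Cg * (16 * N / \<delta>^2) / near_slope
       + 2 * (Ls / (2 * k) / near_slope + Cg * model_error / (near_slope * model_coeff)))
     + (2 * Cg * N / far_gap + 4 * Cg / model_coeff)"

definition estimate_const :: "real \<Rightarrow> real \<Rightarrow> real" where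
  "estimate_const \<delta> N = pi * q1 \<beta> b k * Ll + pi / 2 * remainder_const \<delta> N"

end

locale kernel_instance = kernel_estimate +
  fixes \<delta> xm \<sigma> y x M :: real and A :: "complex \<Rightarrow> complex"
  assumes \<delta>: "0 < \<delta>" and \<sigma>: "0 < \<sigma>" "\<sigma> < 1/2" and y: "\<bar>y\<bar> \<le> a/2" and x: "\<bar>x\<bar> \<le> xm"
    and A_holomorphic: "A holomorphic_on strip \<delta>" and A_bound: "\<And>z. z \<in> strip \<delta> \<Longrightarrow> cmod (A z) \<le> M"
begin

abbreviation l :: real where
  "l \<equiv> \<Lambda> * (1 - \<sigma>^2)"

lemma l_bounds: "0 \<le> l" "l \<le> \<Lambda>" "l < k"
proof -
  have "\<sigma> * \<sigma> < 1 * 1"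
    using \<sigma> by (intro mult_strict_mono) auto
  then have "0 \<le> 1 - \<sigma>^2" "1 - \<sigma>^2 \<le> 1"
    by (simp_all add: power2_eq_square)
  then show "0 \<le> l" "l \<le> \<Lambda>"
    using \<Lambda>_pos by (simp_all add: mult_left_le)
  then show "l < k"
    using \<Lambda>_less_k by linarith
qed

lemma l_mem: "l \<in> {0..\<Lambda>}" and y_mem: "y \<in> {-a/2..a/2}"
  using l_bounds y by auto

lemma A0_bound: "cmod (A 0) \<le> M"
  using A_bound \<delta> by (simp add: strip_def)

lemma M_nonneg: "0 \<le> M"
  using A0_bound norm_ge_zero order_trans by blast

definition G :: "real \<Rightarrow> real" where
  "G p = kernel_amplitude \<beta> b a l y (sqrt (k^2 + p^2))"

definition E :: "real \<Rightarrow> real" where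
  "E p = lam1 \<beta> b (sqrt (k^2 + p^2)) - l"

definition B :: "complex \<Rightarrow> complex" where
  "B z = exp (\<i> * z * of_real x) * A z"

lemma G_bound: "\<bar>G p\<bar> \<le> Cg / (1 + p^2)"
  unfolding G_def using decay l_bounds y by simp

lemma G_0: "G 0 = kernel_amplitude \<beta> b a l y k"
  using k by (simp add: G_def)

lemma E_eq: "E p = (lam1 \<beta> b (sqrt (k^2 + p^2)) - \<Lambda>) + \<Lambda> * \<sigma>^2"
  by (simp add: E_def algebra_simps)

lemma E_ge: "\<Lambda> * \<sigma>^2 \<le> E p" and E_pos: "0 < E p"
proof -
  show "\<Lambda> * \<sigma>^2 \<le> E p"
    using lam1_increment_ge[of p] lam1_increment_nonneg[of p] unfolding E_eq by linarith
  moreover have "0 < \<Lambda> * \<sigma>^2"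
    using \<Lambda>_pos \<sigma> by simp
  ultimately show "0 < E p"
    by linarith
qed

lemma B_holomorphic: "B holomorphic_on strip \<delta>"
  unfolding B_def[abs_def] by (intro holomorphic_intros A_holomorphic)

lemma B_bound:
  assumes "z \<in> strip \<delta>"
  shows "cmod (B z) \<le> exp (xm * \<delta>) * M"
proof -
  have "- (Im z * x) \<le> \<bar>Im z\<bar> * \<bar>x\<bar>"
    by (metis abs_mult abs_ge_minus_self)
  also have "\<dots> \<le> \<delta> * xm"
    using assms x by (intro mult_mono) (auto simp: strip_def)
  finally have "cmod (exp (\<i> * z * of_real x)) \<le> exp (xm * \<delta>)"
    by (simp add: mult.commute)
  then show ?thesis
    unfolding B_def norm_mult using A_bound[OF assms] by (intro mult_mono) auto
qed

lemma integrand_eq: "kernel_integrand \<beta> b a k l y x A p = of_real (G p / E p) * B (of_real p)"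
  by (simp add: kernel_integrand_def G_def E_def B_def)

lemma integrand_bound:
  "cmod (kernel_integrand \<beta> b a k l y x A p) \<le> Cg * exp (xm * \<delta>) * M / (\<Lambda> * \<sigma>^2) / (1 + p^2)"
proof -
  have "\<bar>G p\<bar> / E p \<le> (Cg / (1 + p^2)) / (\<Lambda> * \<sigma>^2)"
    using G_bound[of p] E_ge[of p] \<Lambda>_pos \<sigma> nonneg by (intro frac_le) (auto intro: add_pos_nonneg)
  moreover have "cmod (B (of_real p)) \<le> exp (xm * \<delta>) * M"
    using B_bound[OF of_real_in_strip[OF \<delta>]] .
  moreover have "0 \<le> (Cg / (1 + p^2)) / (\<Lambda> * \<sigma>^2)" "0 \<le> \<bar>G p\<bar> / E p"
    using nonneg \<Lambda>_pos E_pos[of p] by (simp_all add: add_pos_nonneg)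
  ultimately have "\<bar>G p\<bar> / E p * cmod (B (of_real p)) \<le> (Cg / (1 + p^2)) / (\<Lambda> * \<sigma>^2) * (exp (xm * \<delta>) * M)"
    by (intro mult_mono) auto
  moreover have "cmod (kernel_integrand \<beta> b a k l y x A p) = \<bar>G p\<bar> / E p * cmod (B (of_real p))"
    unfolding integrand_eq using E_pos[of p] by (simp add: norm_mult abs_divide del: of_real_divide)
  ultimately have "cmod (kernel_integrand \<beta> b a k l y x A p) \<le> (Cg / (1 + p^2)) / (\<Lambda> * \<sigma>^2) * (exp (xm * \<delta>) * M)"
    by simp
  also have "\<dots> = Cg * exp (xm * \<delta>) * M / (\<Lambda> * \<sigma>^2) / (1 + p^2)"
    by (simp add: mult_ac)
  finally show ?thesis .
qed

lemma integrand_continuous: "continuous_on UNIV (kernel_integrand \<beta> b a k l y x A)"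
proof -
  have "\<bar>\<beta>\<bar> \<le> 1"
    using \<beta> by simp
  note nz = tanh_denominators_nonzero[OF this]
  have "sqrt (k^2 + p^2) - l \<noteq> 0" for p
    using real_sqrt_sum_squares_ge1[of k p] l_bounds(3) by linarith
  then have "continuous_on UNIV G"
    unfolding G_def[abs_def] kernel_amplitude_def P0_def by (intro continuous_intros) (auto simp: nz)
  moreover have "continuous_on UNIV E"
    unfolding E_def[abs_def] lam1_def by (intro continuous_intros) (auto simp: nz)
  moreover have "continuous_on UNIV (\<lambda>p::real. A (of_real p))"
    by (rule continuous_on_compose2[OF holomorphic_on_imp_continuous_on[OF A_holomorphic]])
      (use of_real_in_strip[OF \<delta>] in \<open>auto intro: continuous_intros\<close>)
  moreover have "E p \<noteq> 0" for p
    using E_pos[of p] by simp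
  ultimately show ?thesis
    unfolding integrand_eq[abs_def] B_def by (intro continuous_intros) auto
qed

lemma integrand_integrable: "integrable lborel (kernel_integrand \<beta> b a k l y x A)"
proof (rule Bochner_Integration.integrable_bound)
  show "integrable lborel (\<lambda>p. Cg * exp (xm * \<delta>) * M / (\<Lambda> * \<sigma>^2) * (1 / (1 + p^2)))"
    by (intro integrable_mult_right lborel_integral_inverse_1_plus_square(1))
  show "kernel_integrand \<beta> b a k l y x A \<in> borel_measurable lborel"
    using integrand_continuous by (simp add: borel_measurable_continuous_onI)
  show "AE p in lborel. norm (kernel_integrand \<beta> b a k l y x A p)
      \<le> norm (Cg * exp (xm * \<delta>) * M / (\<Lambda> * \<sigma>^2) * (1 / (1 + p^2)))"
  proof (intro AE_I2)
    fix p :: real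
    have "0 \<le> Cg * exp (xm * \<delta>) * M / (\<Lambda> * \<sigma>^2)"
      using nonneg M_nonneg \<Lambda>_pos by simp
    then show "norm (kernel_integrand \<beta> b a k l y x A p)
        \<le> norm (Cg * exp (xm * \<delta>) * M / (\<Lambda> * \<sigma>^2) * (1 / (1 + p^2)))"
      using integrand_bound[of p] nonneg M_nonneg \<Lambda>_pos by (simp add: abs_mult add_pos_nonneg)
  qed
qed

text \<open>The quadratic model of \<open>E\<close> near \<open>p = 0\<close>; \<open>G 0 A(0) / Q\<close> carries the whole
  singular part of the integrand as \<open>\<sigma> \<rightarrow> 0\<close>.\<close>
definition Q :: "real \<Rightarrow> real" where
  "Q p = \<Lambda> * \<sigma>^2 + model_coeff * p^2"

lemma Q_ge: "model_coeff * p^2 \<le> Q p" and Q_pos: "0 < Q p"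
proof -
  have "0 < \<Lambda> * \<sigma>^2"
    using \<Lambda>_pos \<sigma> by simp
  moreover have "0 \<le> model_coeff * p^2"
    using model_coeff_pos by simp
  ultimately show "model_coeff * p^2 \<le> Q p" "0 < Q p"
    unfolding Q_def by linarith+
qed

lemma model_integral:
  "integrable lborel (\<lambda>p. 1 / Q p)" "(LINT p|lborel. 1 / Q p) = pi * q1 \<beta> b k / (\<Lambda> * \<sigma>)"
proof -
  have pos: "0 < \<Lambda> * \<sigma>^2"
    using \<Lambda>_pos \<sigma> by simp
  show "integrable lborel (\<lambda>p. 1 / Q p)"
    unfolding Q_def by (rule lborel_integral_inverse_quadratic(1)[OF pos model_coeff_pos])
  have "sqrt (\<Lambda> * \<sigma>^2 * model_coeff) = \<sigma> * (sqrt \<Lambda> * sqrt model_coeff)"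
    using \<sigma> by (simp add: real_sqrt_mult)
  moreover have "q1 \<beta> b k = sqrt \<Lambda> / sqrt model_coeff"
    by (simp add: q1_eq real_sqrt_divide)
  moreover have "sqrt \<Lambda> * sqrt \<Lambda> = \<Lambda>" "0 < sqrt \<Lambda>" "0 < sqrt model_coeff"
    using \<Lambda>_pos model_coeff_pos by auto
  ultimately have "pi / sqrt (\<Lambda> * \<sigma>^2 * model_coeff) = pi * q1 \<beta> b k / (\<Lambda> * \<sigma>)"
    using \<sigma> by (simp add: field_simps)
  then show "(LINT p|lborel. 1 / Q p) = pi * q1 \<beta> b k / (\<Lambda> * \<sigma>)"
    unfolding Q_def using lborel_integral_inverse_quadratic(2)[OF pos model_coeff_pos] by simp
qed

definition R :: "real \<Rightarrow> complex" where
  "R p = kernel_integrand \<beta> b a k l y x A p - of_real (G 0 * (1 / Q p)) * A 0"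

lemma model_term_integrable: "integrable lborel (\<lambda>p. of_real (G 0 * (1 / Q p)) * A 0)"
  by (intro integrable_mult_left integrable_of_real integrable_mult_right model_integral(1))

lemma R_integrable: "integrable lborel R"
  unfolding R_def[abs_def] using integrand_integrable model_term_integrable by simp

lemma integral_R:
  "(LINT p|lborel. R p) = (LINT p|lborel. kernel_integrand \<beta> b a k l y x A p)
     - of_real (G 0 * (pi * q1 \<beta> b k / (\<Lambda> * \<sigma>))) * A 0"
proof -
  have "(LINT p|lborel. R p) = (LINT p|lborel. kernel_integrand \<beta> b a k l y x A p)
      - (LINT p|lborel. of_real (G 0 * (1 / Q p)) * A 0)"
    unfolding R_def by (rule Bochner_Integration.integral_diff[OF integrand_integrable model_term_integrable])
  also have "(LINT p|lborel. of_real (G 0 * (1 / Q p)) * A 0) = of_real (LINT p|lborel. G 0 * (1 / Q p)) * A 0"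
    by (simp only: integral_mult_left_zero integral_complex_of_real)
  also have "\<dots> = of_real (G 0 * (pi * q1 \<beta> b k / (\<Lambda> * \<sigma>))) * A 0"
    by (simp only: integral_mult_right_zero model_integral(2))
  finally show ?thesis .
qed

lemma R_symmetric:
  "R p + R (- p) = of_real (G p / E p) * (B (of_real p) + B (- of_real p)) - 2 * A 0 * of_real (G 0 / Q p)"
proof -
  have "G (- p) = G p" "E (- p) = E p" "Q (- p) = Q p"
    by (simp_all add: G_def E_def Q_def)
  then show ?thesis
    unfolding R_def integrand_eq by (simp add: algebra_simps del: of_real_divide)
qed

text \<open>Pairing \<open>p\<close> with \<open>-p\<close> cancels the first-order term \<open>B'(0) p\<close>, which the
  denominator \<open>E p \<approx> \<Lambda>\<^sub>1 \<sigma>\<^sup>2 + model_coeff p\<^sup>2\<close> could not absorb uniformly in \<open>\<sigma>\<close>.\<close>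
lemma R_symmetric_near:
  assumes "p^2 \<le> 1"
  shows "cmod (R p + R (- p)) \<le> M * (Cg * (16 * exp (xm * \<delta>) / \<delta>^2) / near_slope
      + 2 * (Ls / (2 * k) / near_slope + Cg * model_error / (near_slope * model_coeff)))"
proof -
  have "0 \<le> \<Lambda> * \<sigma>^2"
    using \<Lambda>_pos by simp
  then have E: "near_slope * p^2 \<le> E p"
    using lam1_increment_near[OF assms] E_eq[of p] by linarith
  have "Cg / (1 + p^2) \<le> Cg / 1"
    using nonneg by (intro divide_left_mono) (auto intro: add_pos_nonneg)
  then have "\<bar>G p\<bar> \<le> Cg"
    using G_bound[of p] by simp
  have G0: "\<bar>G 0\<bar> \<le> Cg"
    using G_bound[of 0] by simp
  have QE: "\<bar>Q p - E p\<bar> \<le> model_error * p^2 * p^2"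
    using model_denominator_error[OF assms] by (simp add: Q_def E_eq)
  have Gd: "\<bar>G p - G 0\<bar> \<le> Ls / (2 * k) * p^2"
    using amplitude_increment_near[OF l_mem y_mem assms] k by (simp add: G_def)
  have "0 \<le> Ls / (2 * k)" "0 \<le> model_error"
    using nonneg k model_coeff_pos by (simp_all add: model_error_def)
  note quot = quotient_difference_bound[OF E_pos E near_slope_pos Q_pos Q_ge model_coeff_pos Gd
      this(1) G0 QE this(2)]
  have F: "cmod (B (of_real p) + B (- of_real p) - 2 * A 0) \<le> 16 * (exp (xm * \<delta>) * M) / \<delta>^2 * p^2"
    using second_difference_bound[OF B_holomorphic B_bound \<delta>, of p] by (simp add: B_def)
  have "0 \<le> 16 * (exp (xm * \<delta>) * M) / \<delta>^2"
    using M_nonneg by simp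
  from symmetrized_difference_bound_near[OF E_pos E near_slope_pos \<open>\<bar>G p\<bar> \<le> Cg\<close> quot F this A0_bound]
  show ?thesis
    unfolding R_symmetric by (simp add: algebra_simps)
qed

lemma R_symmetric_far:
  assumes "1 \<le> p^2"
  shows "cmod (R p + R (- p)) \<le> M * (2 * Cg * exp (xm * \<delta>) / far_gap + 4 * Cg / model_coeff) / (1 + p^2)"
proof -
  have "0 \<le> \<Lambda> * \<sigma>^2"
    using \<Lambda>_pos by simp
  then have E: "far_gap \<le> E p"
    using lam1_increment_far[OF assms] E_eq[of p] by linarith
  have "model_coeff / 2 * 1 \<le> model_coeff / 2 * p^2"
    using assms model_coeff_pos by (intro mult_left_mono) auto
  then have Q: "model_coeff / 2 * (1 + p^2) \<le> Q p"
    using Q_ge[of p] by (simp add: algebra_simps)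
  have "0 < model_coeff / 2"
    using model_coeff_pos by simp
  have "\<bar>G 0\<bar> \<le> Cg"
    using G_bound[of 0] by simp
  have "cmod (B (of_real p)) \<le> exp (xm * \<delta>) * M" "cmod (B (- of_real p)) \<le> exp (xm * \<delta>) * M"
    using B_bound of_real_in_strip[OF \<delta>, of p] of_real_in_strip[OF \<delta>, of "- p"] by auto
  from symmetrized_difference_bound_far[OF far_gap_pos E \<open>0 < model_coeff / 2\<close> Q G_bound
      \<open>\<bar>G 0\<bar> \<le> Cg\<close> this A0_bound]
  have "cmod (R p + R (- p))
      \<le> (2 * Cg * (exp (xm * \<delta>) * M) / far_gap + 2 * M * Cg / (model_coeff / 2)) / (1 + p^2)"
    unfolding R_symmetric .
  also have "\<dots> = M * (2 * Cg * exp (xm * \<delta>) / far_gap + 4 * Cg / model_coeff) / (1 + p^2)"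
    by (simp add: field_simps)
  finally show ?thesis .
qed

lemma R_symmetric_bound:
  "cmod (R p + R (- p)) \<le> remainder_const \<delta> (exp (xm * \<delta>)) * M / (1 + p^2)"
proof -
  define near where "near = Cg * (16 * exp (xm * \<delta>) / \<delta>^2) / near_slope
      + 2 * (Ls / (2 * k) / near_slope + Cg * model_error / (near_slope * model_coeff))"
  define far where "far = 2 * Cg * exp (xm * \<delta>) / far_gap + 4 * Cg / model_coeff"
  have "0 \<le> near" "0 \<le> far"
    unfolding near_def far_def model_error_def
    using nonneg near_slope_pos far_gap_pos model_coeff_pos k by simp_all
  have P: "1 \<le> 1 + p^2"
    by simp
  have "cmod (R p + R (- p)) \<le> (2 * near + far) * M / (1 + p^2)"
  proof (cases "p^2 \<le> 1")
    case True
    have "(1 + p^2) * (M * near) \<le> 2 * (M * near)"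
      using True M_nonneg \<open>0 \<le> near\<close> by (intro mult_right_mono) auto
    moreover have "0 < 1 + p^2"
      by (simp add: add_pos_nonneg)
    ultimately have "M * near \<le> 2 * (M * near) / (1 + p^2)"
      by (simp add: pos_le_divide_eq mult.commute)
    also have "\<dots> = 2 * near * M / (1 + p^2)"
      by (simp add: mult_ac)
    also have "\<dots> \<le> (2 * near + far) * M / (1 + p^2)"
      using \<open>0 \<le> far\<close> M_nonneg P by (intro divide_right_mono mult_right_mono) auto
    finally show ?thesis
      using R_symmetric_near[OF True] unfolding near_def by linarith
  next
    case False
    have "M * far / (1 + p^2) \<le> (2 * near + far) * M / (1 + p^2)"
      using \<open>0 \<le> near\<close> M_nonneg P by (intro divide_right_mono) (auto simp: algebra_simps)
    then show ?thesis
      using R_symmetric_far[of p] False unfolding far_def by linarith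
  qed
  then show ?thesis
    by (simp add: remainder_const_def near_def far_def)
qed

lemma integral_R_bound: "cmod (LINT p|lborel. R p) \<le> pi / 2 * remainder_const \<delta> (exp (xm * \<delta>)) * M"
proof -
  define c where "c = remainder_const \<delta> (exp (xm * \<delta>)) * M / 2"
  have "(LINT p|lborel. R p) = (LINT p|lborel. (R p + R (- p)) / 2)"
    using R_integrable lborel_integral_reflect[of R] by simp
  also have "cmod \<dots> \<le> (LINT p|lborel. c * (1 / (1 + p^2)))"
  proof (rule Bochner_Integration.integral_norm_bound_integral)
    show "integrable lborel (\<lambda>p. (R p + R (- p)) / 2)"
      using R_integrable lborel_integral_reflect(2)[of R] by simp
    show "integrable lborel (\<lambda>p. c * (1 / (1 + p^2)))"
      by (intro integrable_mult_right lborel_integral_inverse_1_plus_square(1))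
    show "cmod ((R p + R (- p)) / 2) \<le> c * (1 / (1 + p^2))" if "p \<in> space lborel" for p
    proof -
      have "cmod (R p + R (- p)) / 2 \<le> remainder_const \<delta> (exp (xm * \<delta>)) * M / (1 + p^2) / 2"
        using R_symmetric_bound[of p] by (rule divide_right_mono) simp
      then show ?thesis
        by (simp add: c_def norm_divide algebra_simps)
    qed
  qed
  also have "\<dots> = pi / 2 * remainder_const \<delta> (exp (xm * \<delta>)) * M"
    by (simp only: integral_mult_right_zero lborel_integral_inverse_1_plus_square(2)) (simp add: c_def)
  finally show ?thesis .
qed

lemma integral_estimate:
  "cmod ((LINT p|lborel. kernel_integrand \<beta> b a k l y x A p) - of_real (pole_coeff y / \<sigma>) * A 0)
     \<le> estimate_const \<delta> (exp (xm * \<delta>)) * M"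
proof -
  define c where "c = pi * q1 \<beta> b k / (\<Lambda> * \<sigma>)"
  have "0 \<le> c"
    using \<Lambda>_pos \<sigma> q1_nonneg by (simp add: c_def)
  have "\<bar>G 0 - kernel_amplitude \<beta> b a \<Lambda> y k\<bar> \<le> Ll * (\<Lambda> * \<sigma>^2)"
    using lipschitz_l[OF y_mem l_mem, of \<Lambda>] \<Lambda>_pos by (simp add: G_0 algebra_simps)
  then have "\<bar>G 0 - kernel_amplitude \<beta> b a \<Lambda> y k\<bar> * c * cmod (A 0) \<le> Ll * (\<Lambda> * \<sigma>^2) * c * M"
    using \<open>0 \<le> c\<close> A0_bound nonneg by (intro mult_mono) auto
  also have "\<dots> = pi * q1 \<beta> b k * Ll * M * \<sigma>"
    using \<Lambda>_pos \<sigma> by (simp add: c_def power2_eq_square field_simps)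
  also have "\<dots> \<le> pi * q1 \<beta> b k * Ll * M"
    using \<sigma> nonneg M_nonneg q1_nonneg by (intro mult_left_le) auto
  finally have pole: "cmod (of_real ((G 0 - kernel_amplitude \<beta> b a \<Lambda> y k) * c) * A 0) \<le> pi * q1 \<beta> b k * Ll * M"
    using \<open>0 \<le> c\<close> by (simp add: norm_mult abs_mult del: of_real_diff of_real_mult)
  have "pole_coeff y / \<sigma> = kernel_amplitude \<beta> b a \<Lambda> y k * c"
    by (simp add: pole_coeff_def c_def)
  then have "(LINT p|lborel. kernel_integrand \<beta> b a k l y x A p) - of_real (pole_coeff y / \<sigma>) * A 0
      = (LINT p|lborel. R p) + of_real ((G 0 - kernel_amplitude \<beta> b a \<Lambda> y k) * c) * A 0"
    unfolding integral_R c_def by (simp add: algebra_simps)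
  then have "cmod ((LINT p|lborel. kernel_integrand \<beta> b a k l y x A p) - of_real (pole_coeff y / \<sigma>) * A 0)
      \<le> cmod (LINT p|lborel. R p) + cmod (of_real ((G 0 - kernel_amplitude \<beta> b a \<Lambda> y k) * c) * A 0)"
    by (simp only: norm_triangle_ineq)
  also have "\<dots> \<le> pi / 2 * remainder_const \<delta> (exp (xm * \<delta>)) * M + pi * q1 \<beta> b k * Ll * M"
    by (rule add_mono[OF integral_R_bound pole])
  also have "\<dots> = estimate_const \<delta> (exp (xm * \<delta>)) * M"
    by (simp add: estimate_const_def algebra_simps)
  finally show ?thesis .
qed

end

lemma (in kernel_estimate) kernel_integral_estimate:
  assumes "0 < \<delta>" "0 < \<sigma>" "\<sigma> < 1/2" "\<bar>y\<bar> \<le> a/2" "\<bar>x\<bar> \<le> xm"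
    and "A holomorphic_on strip \<delta>" "\<And>z. z \<in> strip \<delta> \<Longrightarrow> cmod (A z) \<le> M"
  shows "integrable lborel (kernel_integrand \<beta> b a k (\<Lambda> * (1 - \<sigma>^2)) y x A)"
    and "cmod (kernel_integrand \<beta> b a k (\<Lambda> * (1 - \<sigma>^2)) y x A p)
      \<le> Cg * exp (xm * \<delta>) * M / (\<Lambda> * \<sigma>^2) / (1 + p^2)"
    and "cmod ((LINT p|lborel. kernel_integrand \<beta> b a k (\<Lambda> * (1 - \<sigma>^2)) y x A p) - of_real (pole_coeff y / \<sigma>) * A 0)
      \<le> estimate_const \<delta> (exp (xm * \<delta>)) * M"
proof -
  interpret kernel_instance \<beta> b k a Cg Ls Ll B2 \<delta> xm \<sigma> y x M A
    using assms by unfold_locales auto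
  show "integrable lborel (kernel_integrand \<beta> b a k (\<Lambda> * (1 - \<sigma>^2)) y x A)"
    by (rule integrand_integrable)
  show "cmod (kernel_integrand \<beta> b a k (\<Lambda> * (1 - \<sigma>^2)) y x A p)
      \<le> Cg * exp (xm * \<delta>) * M / (\<Lambda> * \<sigma>^2) / (1 + p^2)"
    by (rule integrand_bound)
  show "cmod ((LINT p|lborel. kernel_integrand \<beta> b a k (\<Lambda> * (1 - \<sigma>^2)) y x A p) - of_real (pole_coeff y / \<sigma>) * A 0)
      \<le> estimate_const \<delta> (exp (xm * \<delta>)) * M"
    by (rule integral_estimate)
qed

section \<open>Continuity in \<open>t\<close> and the bound for \<open>T\<^sub>0\<close>\<close>

lemma Kint_eq_kernel_integrand:
  "Kint \<beta> b k a \<epsilon> X Y l A t = kernel_integrand \<beta> b a k l (\<epsilon> * Y t) (\<epsilon> * X t) A"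
proof
  fix p
  have e: "exp (\<i> * complex_of_real (p * \<epsilon> * X t)) = exp (\<i> * of_real p * of_real (\<epsilon> * X t))"
    by (simp add: mult.assoc)
  have alg: "of_real (1 / (2 * pi) * P * E) * u * v / of_real (D1 * D2) = of_real (P * E / (2 * pi * D2) / D1) * (u * v)"
    for P E D1 D2 :: real and u v :: complex
    by (cases "D1 = 0 \<or> D2 = 0") (auto simp: field_simps)
  show "Kint \<beta> b k a \<epsilon> X Y l A t p = kernel_integrand \<beta> b a k l (\<epsilon> * Y t) (\<epsilon> * X t) A p"
    unfolding Kint_def L1_def kernel_integrand_def kernel_amplitude_def Let_def e by (rule alg)
qed

lemma kernel_integrand_continuous_param:
  assumes "continuous_on UNIV X" "continuous_on UNIV Y"
  shows "continuous_on UNIV (\<lambda>t. kernel_integrand \<beta> b a k l (\<epsilon> * Y t) (\<epsilon> * X t) A p)"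
proof -
  define s where "s = sqrt (k^2 + p^2)"
  define c where "c = P0 \<beta> b s l / (2 * pi * (s - l)) / (lam1 \<beta> b s - l)"
  have "(\<lambda>t. kernel_integrand \<beta> b a k l (\<epsilon> * Y t) (\<epsilon> * X t) A p)
      = (\<lambda>t. of_real (c * exp (- (a - \<epsilon> * Y t) * s)) * (exp (\<i> * of_real p * of_real (\<epsilon> * X t)) * A (of_real p)))"
    by (simp add: kernel_integrand_def kernel_amplitude_def c_def s_def[symmetric] field_simps)
  then show ?thesis
    by (simp only:) (intro continuous_intros assms)
qed

context kernel_estimate
begin

lemma pole_coeff_eq: "pole_coeff y = q1 \<beta> b k * P0 \<beta> b k \<Lambda> / (2 * \<Lambda> * (k - \<Lambda>)) * exp (- (a - y) * k)"
  using \<Lambda>_pos \<Lambda>_less_k by (simp add: pole_coeff_def kernel_amplitude_def field_simps)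

lemma R0_term:
  fixes A :: "complex \<Rightarrow> complex"
  shows "of_real (1 / \<sigma>) * A 0 * of_real (R0 \<beta> b k a \<epsilon> Y t) = of_real (pole_coeff (\<epsilon> * Y t) / \<sigma>) * A 0"
proof -
  have "deriv (lam1 \<beta> b) k = dlam1 \<beta> b k"
    using \<beta> by (intro DERIV_imp_deriv lam1_has_field_derivative) simp
  moreover have "(q1 \<beta> b k)^2 = 2 * k * \<Lambda> / dlam1 \<beta> b k" "0 < q1 \<beta> b k"
    using q1_eq \<Lambda>_pos dlam1_k_pos k by (simp_all add: model_coeff_def)
  ultimately have "k / (q1 \<beta> b k * deriv (lam1 \<beta> b) k) = q1 \<beta> b k / (2 * \<Lambda>)"
    using \<Lambda>_pos dlam1_k_pos k by (simp add: field_simps power2_eq_square)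
  moreover have "exp (- (a - \<epsilon> * Y t) * k) = exp (- k * a) * exp (\<epsilon> * k * Y t)"
    by (simp add: exp_add[symmetric] algebra_simps)
  ultimately have "R0 \<beta> b k a \<epsilon> Y t = pole_coeff (\<epsilon> * Y t)"
    unfolding R0_def Dconst_def pole_coeff_eq Lam1_def using \<Lambda>_less_k by (simp add: field_simps)
  then show ?thesis
    by (simp add: field_simps)
qed

lemma T0hat_eq:
  "T0hat \<beta> b k a \<epsilon> X Y \<sigma> A t
    = (LINT p|lborel. kernel_integrand \<beta> b a k (\<Lambda> * (1 - \<sigma>^2)) (\<epsilon> * Y t) (\<epsilon> * X t) A p)
      - of_real (pole_coeff (\<epsilon> * Y t) / \<sigma>) * A 0"
  by (simp only: T0hat_def Khat_def Kint_eq_kernel_integrand R0_term Lam1_def)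

lemma kernel_integral_continuous:
  fixes A :: "complex \<Rightarrow> complex"
  assumes X: "continuous_on UNIV X" and Y: "continuous_on UNIV Y" and "0 < \<delta>" "0 < \<sigma>" "\<sigma> < 1/2"
    and Y_small: "\<forall>t\<in>{-pi..pi}. \<bar>\<epsilon> * Y t\<bar> \<le> a/2" and X_bound: "\<forall>t\<in>{-pi..pi}. \<bar>\<epsilon> * X t\<bar> \<le> xm"
    and hol: "A holomorphic_on strip \<delta>" and A_bound: "\<And>z. z \<in> strip \<delta> \<Longrightarrow> cmod (A z) \<le> M"
  shows "continuous_on {-pi..pi}
    (\<lambda>t. LINT p|lborel. kernel_integrand \<beta> b a k (\<Lambda> * (1 - \<sigma>^2)) (\<epsilon> * Y t) (\<epsilon> * X t) A p)"
proof (rule continuous_on_LINT_dominated)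
  fix t assume "t \<in> {-pi..pi}"
  note estimates = kernel_integral_estimate[OF \<open>0 < \<delta>\<close> \<open>0 < \<sigma>\<close> \<open>\<sigma> < 1/2\<close>
      Y_small[rule_format, OF this] X_bound[rule_format, OF this] hol A_bound]
  show "kernel_integrand \<beta> b a k (\<Lambda> * (1 - \<sigma>^2)) (\<epsilon> * Y t) (\<epsilon> * X t) A \<in> borel_measurable lborel"
    using estimates(1) by (rule borel_measurable_integrable)
  show "norm (kernel_integrand \<beta> b a k (\<Lambda> * (1 - \<sigma>^2)) (\<epsilon> * Y t) (\<epsilon> * X t) A p)
      \<le> Cg * exp (xm * \<delta>) * M / (\<Lambda> * \<sigma>^2) * (1 / (1 + p^2))" for p
    using estimates(2)[of p] by simp
next
  show "continuous_on {-pi..pi} (\<lambda>t. kernel_integrand \<beta> b a k (\<Lambda> * (1 - \<sigma>^2)) (\<epsilon> * Y t) (\<epsilon> * X t) A p)" for p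
    by (rule continuous_on_subset[OF kernel_integrand_continuous_param[OF X Y]]) simp
  show "integrable lborel (\<lambda>p. Cg * exp (xm * \<delta>) * M / (\<Lambda> * \<sigma>^2) * (1 / (1 + p^2)))"
    by (intro integrable_mult_right lborel_integral_inverse_1_plus_square(1))
qed

lemma T0hat_uniform_bound:
  assumes X: "continuous_on UNIV X" and Y: "continuous_on UNIV Y" and "0 < \<delta>"
    and Y_small: "\<forall>t\<in>{-pi..pi}. \<bar>\<epsilon> * Y t\<bar> \<le> a/2" and X_bound: "\<forall>t\<in>{-pi..pi}. \<bar>\<epsilon> * X t\<bar> \<le> xm"
  shows "\<exists>\<sigma>0>0. \<exists>C. \<forall>\<sigma> A. 0 < \<sigma> \<and> \<sigma> < \<sigma>0
                 \<and> A holomorphic_on strip \<delta> \<and> bounded (A ` strip \<delta>) \<longrightarrow>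
               (\<forall>t\<in>{-pi..pi}. integrable lborel
                   (Kint \<beta> b k a \<epsilon> X Y (Lam1 \<beta> b k * (1 - \<sigma>^2)) A t))
               \<and> continuous_on {-pi..pi} (T0hat \<beta> b k a \<epsilon> X Y \<sigma> A)
               \<and> (\<forall>t\<in>{-pi..pi}. cmod (T0hat \<beta> b k a \<epsilon> X Y \<sigma> A t)
                     \<le> C * (SUP p\<in>strip \<delta>. cmod (A p)))"
proof (rule exI[of _ "1/2"], intro conjI exI[of _ "estimate_const \<delta> (exp (xm * \<delta>))"] allI impI)
  fix \<sigma> :: real and A :: "complex \<Rightarrow> complex"
  assume "0 < \<sigma> \<and> \<sigma> < 1/2 \<and> A holomorphic_on strip \<delta> \<and> bounded (A ` strip \<delta>)"
  then have \<sigma>: "0 < \<sigma>" "\<sigma> < 1/2" and hol: "A holomorphic_on strip \<delta>" and bdd: "bounded (A ` strip \<delta>)"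
    by auto
  define M where "M = (SUP p\<in>strip \<delta>. cmod (A p))"
  have A_bound: "cmod (A z) \<le> M" if "z \<in> strip \<delta>" for z
    unfolding M_def using bdd that by (rule norm_le_SUP_if_bounded)
  note estimates = kernel_integral_estimate[OF \<open>0 < \<delta>\<close> \<sigma> Y_small[rule_format] X_bound[rule_format] hol A_bound]
  show "\<forall>t\<in>{-pi..pi}. integrable lborel (Kint \<beta> b k a \<epsilon> X Y (Lam1 \<beta> b k * (1 - \<sigma>^2)) A t)"
    using estimates(1) by (simp add: Lam1_def Kint_eq_kernel_integrand)
  show "\<forall>t\<in>{-pi..pi}. cmod (T0hat \<beta> b k a \<epsilon> X Y \<sigma> A t)
      \<le> estimate_const \<delta> (exp (xm * \<delta>)) * (SUP p\<in>strip \<delta>. cmod (A p))"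
    using estimates(3) by (simp add: T0hat_eq M_def)
  have "continuous_on {-pi..pi} (\<lambda>t. of_real (pole_coeff (\<epsilon> * Y t) / \<sigma>) * A 0)"
    unfolding pole_coeff_eq using \<sigma> by (intro continuous_intros continuous_on_subset[OF Y]) auto
  with kernel_integral_continuous[OF X Y \<open>0 < \<delta>\<close> \<sigma> Y_small X_bound hol A_bound]
  show "continuous_on {-pi..pi} (T0hat \<beta> b k a \<epsilon> X Y \<sigma> A)"
    unfolding T0hat_eq[abs_def] by (rule continuous_on_diff)
qed simp

end

theorem lemma4p1:
  fixes k a b \<beta> :: real and X Y :: "real \<Rightarrow> real"
  assumes "k > 0" "a > 0" "b > 0" "0 < \<beta>" "\<beta> < 1"
    and "smooth_real X" "smooth_real Y"
    and "\<And>t. X (t + 2 * pi) = X t" "\<And>t. Y (t + 2 * pi) = Y t"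
  shows "\<exists>\<epsilon>0>0. \<forall>\<epsilon>. 0 < \<epsilon> \<and> \<epsilon> < \<epsilon>0 \<longrightarrow>
          (\<exists>\<delta>0>0. \<forall>\<delta>. 0 < \<delta> \<and> \<delta> \<le> \<delta>0 \<longrightarrow>
            (\<exists>\<sigma>0>0. \<exists>C. \<forall>\<sigma> A. 0 < \<sigma> \<and> \<sigma> < \<sigma>0
                 \<and> A holomorphic_on strip \<delta> \<and> bounded (A ` strip \<delta>) \<longrightarrow>
               (\<forall>t\<in>{-pi..pi}. integrable lborel
                   (Kint \<beta> b k a \<epsilon> X Y (Lam1 \<beta> b k * (1 - \<sigma>^2)) A t))
               \<and> continuous_on {-pi..pi} (T0hat \<beta> b k a \<epsilon> X Y \<sigma> A)
               \<and> (\<forall>t\<in>{-pi..pi}. cmod (T0hat \<beta> b k a \<epsilon> X Y \<sigma> A t)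
                     \<le> C * (SUP p\<in>strip \<delta>. cmod (A p)))))"
proof -
  obtain Cg Ls Ll B2 where "kernel_estimate \<beta> b k a Cg Ls Ll B2"
    using kernel_estimate_exists assms(1-5) by blast
  then interpret kernel_estimate \<beta> b k a Cg Ls Ll B2 .
  have X: "continuous_on UNIV X" and Y: "continuous_on UNIV Y"
    using assms(6,7) by (simp_all add: smooth_real_continuous)
  obtain Xm where Xm: "\<forall>t\<in>{-pi..pi}. \<bar>X t\<bar> \<le> Xm"
    using compact_abs_bound[OF compact_Icc continuous_on_subset[OF X subset_UNIV]] by blast
  then have X_bound: "\<forall>t\<in>{-pi..pi}. \<bar>\<epsilon> * X t\<bar> \<le> \<epsilon> * Xm" if "0 < \<epsilon>" for \<epsilon>
    using that by (simp add: abs_mult)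
  obtain \<epsilon>0 where "0 < \<epsilon>0" and Y_small: "\<And>\<epsilon>. 0 < \<epsilon> \<Longrightarrow> \<epsilon> < \<epsilon>0 \<Longrightarrow> \<forall>t\<in>{-pi..pi}. \<bar>\<epsilon> * Y t\<bar> \<le> a/2"
    using small_multiples_uniformly_small[of "{-pi..pi}" Y "a/2"] continuous_on_subset[OF Y subset_UNIV] assms(2)
    by auto
  show ?thesis
    by (rule exI[of _ \<epsilon>0], intro conjI allI impI \<open>0 < \<epsilon>0\<close>, rule exI[of _ "1::real"],
        intro conjI allI impI zero_less_one, rule T0hat_uniform_bound[OF X Y _ Y_small X_bound])
      auto
qed

end
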